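(* Consider the composite SBMD method described in the context with uniform probabilities $p_1=\dots=p_b=1/b$, constant stepsizes \[ \gamma_k=\gamma=\min\left\{\frac1{2\bar L},\frac{\tilde D}{\sigma}\sqrt{\frac bN}\right\}\quad(k\ge1),\qquad \bar L:=\max_iL_i, \] for some $\tilde D>0$, and weights $\theta_1=0$, $\theta_{k+1}=b\gamma_k-(b-1)\gamma_{k+1}$ for $k\ge1$. Then \[ \mathbb{E}[\phi(\bar x_N)-\phi(x^* )]\le\frac{(b-1)[\phi(x_1)-\phi(x^* )]}{N}+\frac{2b\bar L\sum_{i=1}^bV_i(x_1^{(i)},x^{*(i)})}{N}+\frac{\sigma\sqrt b}{\sqrt N}\left[\frac{\sum_{i=1}^bV_i(x_1^{(i)},x^{*(i)})}{\tilde D}+\tilde D\right], \] where $x^*$ is an optimal solution of $\min_{x\in X}\phi(x)$ and $\sigma=(\sum_{i=1}^b\sigma_i^2)^{1/2}$.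
   Context: Block structure: for $i=1,\dots,b$, $X_i\subseteq\mathbb{R}^{n_i}$ is a nonempty closed convex set, $X=X_1\times\cdots\times X_b\subseteq\mathbb{R}^n$. Each $\mathbb{R}^{n_i}$ carries a norm $\|\cdot\|_i$ with dual $\|\cdot\|_{i,*}$; $U_i\in\mathbb{R}^{n\times n_i}$ satisfy $(U_1,\dots,U_b)=I_n$, $x^{(i)}:=U_i^Tx$. Problem: $\phi(x)=f(x)+\chi(x)$ on $X$, where $f(x)=\mathbb{E}[F(x,\xi)]$ is convex and differentiable with gradient $g$, $g_i:=U_i^Tg$, and $\|g_i(x+U_i\rho)-g_i(x)\|_{i,*}\le L_i\|\rho\|_i$ whenever $x,x+U_i\rho\in X$; $\chi(x)=\sum_{i=1}^b\chi_i(x^{(i)})$ with each $\chi_i:\mathbb{R}^{n_i}\to\mathbb{R}$ closed convex. A stochastic oracle returns $G(x,\xi)$ with $\mathbb{E}[G(x,\xi)]=g(x)$ and $\mathbb{E}[\|G_i(x,\xi)-g_i(x)\|_{i,*}^2]\le\sigma_i^2$ for all $x\in X$ ($G_i=U_i^TG$); assume $\sigma>0$. The problem has an optimal solution $x^*$. Prox setup: $\omega_i:X_i\to\mathbb{R}$ continuously differentiable, 1-strongly convex w.r.t. $\|\cdot\|_i$; $V_i(z,x)=\omega_i(x)-\omega_i(z)-\langle\nabla\omega_i(z),x-z\rangle$; $\mathcal P_i(x,y,\gamma)=\arg\min_{z\in X_i}\{\langle y,z-x\rangle+\frac1\gamma V_i(x,z)+\chi_i(z)\}$. Composite SBMD method: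 given $x_1\in X$; $\xi_1,\xi_2,\dots$ i.i.d. copies of $\xi$, $i_1,i_2,\dots$ i.i.d. with $\mathrm{Prob}(i_k=i)=p_i$, independent of the $\xi_k$. For $k=1,\dots,N$: $x_{k+1}^{(i_k)}=\mathcal P_{i_k}(x_k^{(i_k)},G_{i_k}(x_k,\xi_k),\gamma_k)$, $x_{k+1}^{(i)}=x_k^{(i)}$ for $i\ne i_k$. Output $\bar x_N=\left(\sum_{k=2}^{N+1}\theta_k\right)^{-1}\sum_{k=2}^{N+1}\theta_kx_k$. Expectations w.r.t. $\{i_k\},\{\xi_k\}$. *)

theory Defs
  imports "HOL-Probability.Probability"
begin

text \<open>Block structure on R^n = real^'n: the coordinates are partitioned into blocks
  via blk :: 'n => nat (block labels in 1..b).  Block i vectors x^(i) = U_i^T x are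
  represented as the vectors of real^'n supported on the coordinates of block i;
  U_i x^(i) is then the same vector.\<close>

definition blkspace :: "('n::finite \<Rightarrow> nat) \<Rightarrow> nat \<Rightarrow> (real^'n) set" where
  "blkspace blk i = {u. \<forall>j. blk j \<noteq> i \<longrightarrow> u $ j = 0}"

definition blkproj :: "('n::finite \<Rightarrow> nat) \<Rightarrow> nat \<Rightarrow> real^'n \<Rightarrow> real^'n" where
  "blkproj blk i x = (\<chi> j. if blk j = i then x $ j else 0)"

definition norm_on :: "'a::real_vector set \<Rightarrow> ('a \<Rightarrow> real) \<Rightarrow> bool" where
  "norm_on E N \<longleftrightarrow>
     (\<forall>u\<in>E. 0 \<le> N u \<and> (N u = 0 \<longleftrightarrow> u = 0)) \<and>
     (\<forall>u\<in>E. \<forall>c. N (c *\<^sub>R u) = \<bar>c\<bar> * N u) \<and>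
     (\<forall>u\<in>E. \<forall>v\<in>E. N (u + v) \<le> N u + N v)"

definition dual_norm :: "'a::real_inner set \<Rightarrow> ('a \<Rightarrow> real) \<Rightarrow> 'a \<Rightarrow> real" where
  "dual_norm E N y = Sup {y \<bullet> z | z. z \<in> E \<and> N z \<le> 1}"

definition strongly_convex_wrt :: "'a::real_vector set \<Rightarrow> ('a \<Rightarrow> real) \<Rightarrow> ('a \<Rightarrow> real) \<Rightarrow> bool" where
  "strongly_convex_wrt S N w \<longleftrightarrow>
     (\<forall>x\<in>S. \<forall>z\<in>S. \<forall>t::real. 0 \<le> t \<and> t \<le> 1 \<longrightarrow>
        w (t *\<^sub>R x + (1 - t) *\<^sub>R z) \<le> t * w x + (1 - t) * w z - t * (1 - t) / 2 * (N (x - z))^2)"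

definition bregman :: "('a::real_inner \<Rightarrow> real) \<Rightarrow> ('a \<Rightarrow> 'a) \<Rightarrow> 'a \<Rightarrow> 'a \<Rightarrow> real" where
  "bregman w gw z x = w x - w z - gw z \<bullet> (x - z)"

definition prox :: "'a::real_inner set \<Rightarrow> ('a \<Rightarrow> real) \<Rightarrow> ('a \<Rightarrow> 'a) \<Rightarrow> ('a \<Rightarrow> real)
                     \<Rightarrow> 'a \<Rightarrow> 'a \<Rightarrow> real \<Rightarrow> 'a" where
  "prox S w gw chi x y gm =
     (SOME z. z \<in> S \<and> (\<forall>u\<in>S. y \<bullet> (z - x) + bregman w gw x z / gm + chi z
                              \<le> y \<bullet> (u - x) + bregman w gw x u / gm + chi u))"

definition sbmd_step ::
  "('n::finite \<Rightarrow> nat) \<Rightarrow> (nat \<Rightarrow> (real^'n) set) \<Rightarrow> (nat \<Rightarrow> real^'n \<Rightarrow> real)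
   \<Rightarrow> (nat \<Rightarrow> real^'n \<Rightarrow> real^'n) \<Rightarrow> (nat \<Rightarrow> real^'n \<Rightarrow> real)
   \<Rightarrow> (real^'n \<Rightarrow> 'e \<Rightarrow> real^'n) \<Rightarrow> real \<Rightarrow> real^'n \<Rightarrow> nat \<times> 'e \<Rightarrow> real^'n" where
  "sbmd_step blk Xb w gw chi G gm x ie =
     (case ie of (i, e) \<Rightarrow>
        x - blkproj blk i x
          + prox (Xb i) (w i) (gw i) (chi i) (blkproj blk i x) (blkproj blk i (G x e)) gm)"

text \<open>Iterates: sbmd_x ... om k is x_k for k >= 1, where om k = (i_k, xi_k).\<close>
fun sbmd_x ::
  "('n::finite \<Rightarrow> nat) \<Rightarrow> (nat \<Rightarrow> (real^'n) set) \<Rightarrow> (nat \<Rightarrow> real^'n \<Rightarrow> real)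
   \<Rightarrow> (nat \<Rightarrow> real^'n \<Rightarrow> real^'n) \<Rightarrow> (nat \<Rightarrow> real^'n \<Rightarrow> real)
   \<Rightarrow> (real^'n \<Rightarrow> 'e \<Rightarrow> real^'n) \<Rightarrow> (nat \<Rightarrow> real) \<Rightarrow> real^'n
   \<Rightarrow> (nat \<Rightarrow> nat \<times> 'e) \<Rightarrow> nat \<Rightarrow> real^'n" where
  "sbmd_x blk Xb w gw chi G gam x1 om 0 = x1"
| "sbmd_x blk Xb w gw chi G gam x1 om (Suc 0) = x1"
| "sbmd_x blk Xb w gw chi G gam x1 om (Suc (Suc k)) =
     sbmd_step blk Xb w gw chi G (gam (Suc k)) (sbmd_x blk Xb w gw chi G gam x1 om (Suc k)) (om (Suc k))"

definition sbmd_avg :: "(nat \<Rightarrow> real) \<Rightarrow> (nat \<Rightarrow> 'a::real_vector) \<Rightarrow> nat \<Rightarrow> 'a" where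
  "sbmd_avg \<theta> xs N = inverse (\<Sum>k=2..N+1. \<theta> k) *\<^sub>R (\<Sum>k=2..N+1. \<theta> k *\<^sub>R xs k)"

end

theory Submission
  imports Defs
begin

text \<open>With the constant stepsize gm the output is the plain average of x_2, ..., x_{N+1}.
  For one step on the uniformly chosen block, the three-point inequality of the prox mapping,
  the block descent lemma (with gm L_i \<le> 1/2) and the 1-strong convexity of the distance
  generating functions show that lyap x = b gm (\<phi> x - \<phi> x*) + b \<Sigma>_i V_i(x^(i), x*^(i)) satisfies
  E lyap x_{k+1} \<le> lyap x_k - gm (\<phi> x_k - \<phi> x*) + gm^2 \<sigma>^2 in expectation over (i_k, \<xi>_k).
  Telescoping, together with Jensen's inequality for the convex \<phi>, bounds
  N gm E (\<phi> (avg) - \<phi> x*) by (b - 1) gm (\<phi> x_1 - \<phi> x*) + b \<Sigma>_i V_i + N gm^2 \<sigma>^2, and the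
  choice of gm balances the last two terms.\<close>

section \<open>Block coordinates\<close>

lemma blkproj_in_blkspace [simp]: "blkproj blk i x \<in> blkspace blk i"
  by (simp add: blkspace_def blkproj_def)

lemma blkproj_blkspace: "u \<in> blkspace blk i \<Longrightarrow> blkproj blk i u = u"
  by (auto simp: blkspace_def blkproj_def vec_eq_iff)

lemma blkproj_update:
  "P \<in> blkspace blk i \<Longrightarrow>
     blkproj blk k (x - blkproj blk i x + P) = (if k = i then P else blkproj blk k x)"
  by (auto simp: blkproj_def blkspace_def vec_eq_iff)

lemma linear_blkproj: "linear (blkproj blk i)"
  by (rule linearI) (auto simp: blkproj_def vec_eq_iff)

lemma blkproj_add: "blkproj blk i (x + y) = blkproj blk i x + blkproj blk i y"
  by (rule linear_add[OF linear_blkproj])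

lemma blkproj_scaleR: "blkproj blk i (c *\<^sub>R x) = c *\<^sub>R blkproj blk i x"
  by (rule linear_scale[OF linear_blkproj])

lemma isCont_blkproj: "isCont (blkproj blk i) x"
  by (intro linear_continuous_at linear_conv_bounded_linear[THEN iffD1, OF linear_blkproj])

lemma continuous_on_blkproj [continuous_intros]:
  "continuous_on A h \<Longrightarrow> continuous_on A (\<lambda>x. blkproj blk i (h x))"
  by (intro continuous_on_compose2[OF continuous_at_imp_continuous_on, where g = "blkproj blk i"]
      ballI isCont_blkproj) auto

lemma subspace_blkspace: "subspace (blkspace blk i)"
  by (auto simp: subspace_def blkspace_def)

lemma blkspace_diff: "u \<in> blkspace blk i \<Longrightarrow> v \<in> blkspace blk i \<Longrightarrow> u - v \<in> blkspace blk i"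
  by (rule subspace_diff[OF subspace_blkspace])

lemma blkspace_scaleR: "u \<in> blkspace blk i \<Longrightarrow> c *\<^sub>R u \<in> blkspace blk i"
  by (rule subspace_scale[OF subspace_blkspace])

lemma zero_in_blkspace [simp]: "0 \<in> blkspace blk i"
  by (rule subspace_0[OF subspace_blkspace])

lemma closed_blkspace: "closed (blkspace blk i)"
  by (rule closed_subspace[OF subspace_blkspace])

lemma inner_blkproj_left: "u \<in> blkspace blk i \<Longrightarrow> blkproj blk i v \<bullet> u = v \<bullet> u"
  by (auto simp: inner_vec_def blkproj_def blkspace_def intro!: sum.cong)

lemma inner_eq_sum_blkproj:
  assumes "\<forall>j. blk j \<in> {1..b}"
  shows "v \<bullet> u = (\<Sum>i=1..b. blkproj blk i v \<bullet> blkproj blk i u)"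
proof -
  have "(\<Sum>i=1..b. blkproj blk i v \<bullet> blkproj blk i u)
      = (\<Sum>j\<in>UNIV. \<Sum>i=1..b. if blk j = i then v $ j * u $ j else 0)"
    by (subst sum.swap) (auto simp: inner_vec_def blkproj_def intro!: sum.cong)
  also have "\<dots> = v \<bullet> u"
    using assms by (auto simp: inner_vec_def intro!: sum.cong)
  finally show ?thesis ..
qed

text \<open>A convex function on a block extends, through the projection, to a convex function
  on the whole finite-dimensional space, which is continuous there.\<close>
lemma continuous_on_convex_on_blkspace:
  assumes "convex_on (blkspace blk i) h"
  shows "continuous_on (blkspace blk i) h"
proof -
  have "convex_on UNIV (\<lambda>x. h (blkproj blk i x))"
    using convex_onD[OF assms]
    by (intro convex_onI) (simp_all add: blkproj_add blkproj_scaleR)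
  then have "continuous_on UNIV (\<lambda>x. h (blkproj blk i x))"
    by (intro convex_on_continuous) auto
  then show ?thesis
    by (rule continuous_on_cong[THEN iffD1, rotated 2, OF continuous_on_subset])
       (auto simp: blkproj_blkspace)
qed

section \<open>Norms on a block and their duals\<close>

lemma norm_on_zero: "norm_on E N \<Longrightarrow> 0 \<in> E \<Longrightarrow> N 0 = 0"
  by (auto simp: norm_on_def)

lemma norm_on_nonneg: "norm_on E N \<Longrightarrow> u \<in> E \<Longrightarrow> 0 \<le> N u"
  by (auto simp: norm_on_def)

lemma norm_on_pos: "norm_on E N \<Longrightarrow> u \<in> E \<Longrightarrow> u \<noteq> 0 \<Longrightarrow> 0 < N u"
  unfolding norm_on_def by (metis order_le_less)

lemma norm_on_scaleR: "norm_on E N \<Longrightarrow> u \<in> E \<Longrightarrow> N (c *\<^sub>R u) = \<bar>c\<bar> * N u"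
  by (auto simp: norm_on_def)

lemma norm_on_triangle: "norm_on E N \<Longrightarrow> u \<in> E \<Longrightarrow> v \<in> E \<Longrightarrow> N (u + v) \<le> N u + N v"
  by (auto simp: norm_on_def)

lemma norm_on_minus: "norm_on E N \<Longrightarrow> u \<in> E \<Longrightarrow> N (- u) = N u"
  using norm_on_scaleR[of E N u "-1"] by simp

lemma convex_on_norm_on:
  assumes N: "norm_on E N" and E: "subspace E"
  shows "convex_on E N"
proof (rule convex_onI)
  fix t :: real and x y assume t: "0 < t" "t < 1" and xy: "x \<in> E" "y \<in> E"
  have "N ((1 - t) *\<^sub>R x + t *\<^sub>R y) \<le> N ((1 - t) *\<^sub>R x) + N (t *\<^sub>R y)"
    using xy E by (intro norm_on_triangle[OF N] subspace_scale)
  also have "\<dots> = (1 - t) * N x + t * N y"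
    using t xy by (simp add: norm_on_scaleR[OF N])
  finally show "N ((1 - t) *\<^sub>R x + t *\<^sub>R y) \<le> (1 - t) * N x + t * N y" .
qed (rule subspace_imp_convex[OF E])

lemma norm_on_ge_scaled_norm_of_sphere:
  assumes N: "norm_on E N" and E: "subspace E"
    and sphere: "\<forall>v\<in>sphere 0 1 \<inter> E. c \<le> N v"
  shows "\<forall>u\<in>E. c * norm u \<le> N u"
proof
  fix u assume u: "u \<in> E"
  show "c * norm u \<le> N u"
  proof (cases "u = 0")
    case False
    then have "c \<le> N (inverse (norm u) *\<^sub>R u)"
      using sphere u E by (auto intro: subspace_scale)
    then show ?thesis
      using False u by (simp add: norm_on_scaleR[OF N] field_simps)
  qed (simp add: norm_on_zero[OF N subspace_0[OF E]])
qed

text \<open>Norm equivalence: the unit sphere of the block is compact and avoids the zero of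
  the continuous function N.\<close>
lemma norm_on_blkspace_ge_scaled_norm:
  assumes N: "norm_on (blkspace blk i) N"
  shows "\<exists>c>0. \<forall>u\<in>blkspace blk i. c * norm u \<le> N u"
proof (cases "sphere 0 1 \<inter> blkspace blk i = {}")
  case True
  then have "\<forall>u\<in>blkspace blk i. 1 * norm u \<le> N u"
    by (intro norm_on_ge_scaled_norm_of_sphere[OF N subspace_blkspace]) auto
  then show ?thesis by (intro exI[of _ "1::real"]) auto
next
  case False
  have "continuous_on (sphere 0 1 \<inter> blkspace blk i) N"
    by (rule continuous_on_subset[OF continuous_on_convex_on_blkspace
          [OF convex_on_norm_on[OF N subspace_blkspace]]]) auto
  then obtain u0 where u0: "u0 \<in> sphere 0 1 \<inter> blkspace blk i"
    and min: "\<forall>v\<in>sphere 0 1 \<inter> blkspace blk i. N u0 \<le> N v"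
    using continuous_attains_inf[OF compact_Int_closed[OF compact_sphere closed_blkspace] False]
    by blast
  have "0 < N u0" using u0 by (intro norm_on_pos[OF N]) auto
  then show ?thesis
    using norm_on_ge_scaled_norm_of_sphere[OF N subspace_blkspace min] by blast
qed

locale block_norm =
  fixes blk :: "'n::finite \<Rightarrow> nat" and i :: nat and N :: "real^'n \<Rightarrow> real"
  assumes norm_on: "norm_on (blkspace blk i) N"
begin

abbreviation dnorm :: "real^'n \<Rightarrow> real" where
  "dnorm \<equiv> dual_norm (blkspace blk i) N"

definition c_equiv :: real where
  "c_equiv = (SOME c. c > 0 \<and> (\<forall>u\<in>blkspace blk i. c * norm u \<le> N u))"

lemma c_equiv_pos: "0 < c_equiv"
  and c_equiv_le: "u \<in> blkspace blk i \<Longrightarrow> c_equiv * norm u \<le> N u"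
  using someI_ex[OF norm_on_blkspace_ge_scaled_norm[OF norm_on]]
  unfolding c_equiv_def[symmetric] by auto

lemma N_zero [simp]: "N 0 = 0"
  by (rule norm_on_zero[OF norm_on zero_in_blkspace])

lemma bdd_above_dual_norm_set: "bdd_above {v \<bullet> z |z. z \<in> blkspace blk i \<and> N z \<le> 1}"
proof (rule bdd_aboveI)
  fix y assume "y \<in> {v \<bullet> z |z. z \<in> blkspace blk i \<and> N z \<le> 1}"
  then obtain z where z: "y = v \<bullet> z" "z \<in> blkspace blk i" "N z \<le> 1" by auto
  have "norm z \<le> 1 / c_equiv"
    using c_equiv_le[OF z(2)] z(3) c_equiv_pos by (simp add: field_simps)
  then have "norm v * norm z \<le> norm v / c_equiv"
    using mult_left_mono[of "norm z" "1 / c_equiv" "norm v"] by simp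
  then show "y \<le> norm v / c_equiv"
    using z(1) norm_cauchy_schwarz[of v z] by linarith
qed

lemma inner_le_dnorm_of_unit: "z \<in> blkspace blk i \<Longrightarrow> N z \<le> 1 \<Longrightarrow> v \<bullet> z \<le> dnorm v"
  unfolding dual_norm_def by (rule cSup_upper[OF _ bdd_above_dual_norm_set]) auto

lemma inner_le_dnorm: assumes d: "d \<in> blkspace blk i" shows "v \<bullet> d \<le> dnorm v * N d"
proof (cases "d = 0")
  case False
  have pos: "0 < N d" using norm_on_pos[OF norm_on d False] .
  have "v \<bullet> (inverse (N d) *\<^sub>R d) \<le> dnorm v"
    using pos d by (intro inner_le_dnorm_of_unit blkspace_scaleR) (simp_all add: norm_on_scaleR[OF norm_on])
  then show ?thesis using pos by (simp add: field_simps)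
qed simp

lemma abs_inner_le_dnorm: "d \<in> blkspace blk i \<Longrightarrow> \<bar>v \<bullet> d\<bar> \<le> dnorm v * N d"
  using inner_le_dnorm[of d v] inner_le_dnorm[of "- d" v] norm_on_minus[OF norm_on, of d]
  by (auto simp: blkspace_scaleR[of d blk i "-1", simplified])

lemma convex_on_dnorm: "convex_on UNIV dnorm"
proof (rule convex_onI)
  fix t :: real and x y :: "real^'n" assume t: "0 < t" "t < 1"
  show "dnorm ((1 - t) *\<^sub>R x + t *\<^sub>R y) \<le> (1 - t) * dnorm x + t * dnorm y"
    unfolding dual_norm_def[of _ _ "(1 - t) *\<^sub>R x + t *\<^sub>R y"]
  proof (rule cSup_least)
    fix a assume "a \<in> {((1 - t) *\<^sub>R x + t *\<^sub>R y) \<bullet> z |z. z \<in> blkspace blk i \<and> N z \<le> 1}"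
    then obtain z where z: "a = ((1 - t) *\<^sub>R x + t *\<^sub>R y) \<bullet> z" "z \<in> blkspace blk i" "N z \<le> 1"
      by auto
    have "a = (1 - t) * (x \<bullet> z) + t * (y \<bullet> z)" using z(1) by (simp add: inner_add_left)
    also have "\<dots> \<le> (1 - t) * dnorm x + t * dnorm y"
      using t inner_le_dnorm_of_unit[OF z(2,3)] by (intro add_mono mult_left_mono) auto
    finally show "a \<le> (1 - t) * dnorm x + t * dnorm y" .
  qed (use zero_in_blkspace[of blk i] in fastforce)
qed simp

lemma borel_measurable_dnorm: "dnorm \<in> borel_measurable borel"
  by (intro borel_measurable_continuous_onI convex_on_continuous[OF _ convex_on_dnorm]) simp

end

section \<open>Gradients, strong convexity and minimizers\<close>

lemma convex_add_scaleR_diff: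
  "convex T \<Longrightarrow> z \<in> T \<Longrightarrow> x \<in> T \<Longrightarrow> 0 \<le> t \<Longrightarrow> t \<le> 1 \<Longrightarrow> z + t *\<^sub>R (x - z) \<in> T"
  using convexD_alt[of T z x t] by (simp add: algebra_simps)

lemma tendsto_difference_quotient_segment:
  fixes F :: "'a::real_inner \<Rightarrow> real"
  assumes der: "(F has_derivative (\<lambda>h. G \<bullet> h)) (at z within T)"
    and T: "convex T" "z \<in> T" "x \<in> T"
  shows "((\<lambda>t. (F (z + t *\<^sub>R (x - z)) - F z) / t) \<longlongrightarrow> G \<bullet> (x - z)) (at_right 0)"
proof -
  let ?p = "\<lambda>t::real. z + t *\<^sub>R (x - z)"
  have p: "(?p has_derivative (\<lambda>t. t *\<^sub>R (x - z))) (at 0 within {0..1})"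
    by (auto intro!: derivative_eq_intros)
  have "?p ` {0..1} \<subseteq> T"
    using T by (auto intro: convex_add_scaleR_diff)
  then have "(F has_derivative (\<lambda>h. G \<bullet> h)) (at (?p 0) within ?p ` {0..1})"
    using has_derivative_subset[OF der] by simp
  from diff_chain_within[OF p this]
  have "((F \<circ> ?p) has_field_derivative (G \<bullet> (x - z))) (at 0 within {0..1})"
    by (simp add: has_field_derivative_def o_def mult.commute mult_commute_abs)
  then show ?thesis
    by (simp add: has_field_derivative_iff at_within_Icc_at_right)
qed

text \<open>A bound on the secants of F from z towards x bounds the directional derivative; for
  B = 0 this is the gradient inequality of a convex function, for B > 0 its strongly convex
  refinement.\<close>
lemma inner_gradient_le_of_secant_bound:
  fixes F :: "'a::real_inner \<Rightarrow> real"
  assumes der: "(F has_derivative (\<lambda>h. G \<bullet> h)) (at z within T)"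
    and T: "convex T" "z \<in> T" "x \<in> T"
    and secant: "\<And>t. 0 < t \<Longrightarrow> t < 1 \<Longrightarrow> F (z + t *\<^sub>R (x - z)) - F z \<le> t * (A - (1 - t) * B)"
  shows "G \<bullet> (x - z) \<le> A - B"
proof -
  have "((\<lambda>t. A - (1 - t) * B) \<longlongrightarrow> A - (1 - 0) * B) (at_right 0)"
    by (intro tendsto_intros)
  moreover have "eventually (\<lambda>t. (F (z + t *\<^sub>R (x - z)) - F z) / t \<le> A - (1 - t) * B) (at_right 0)"
    using eventually_at_right_real[OF zero_less_one]
    by eventually_elim (use secant in \<open>auto simp: divide_le_eq mult.commute\<close>)
  ultimately show ?thesis
    using tendsto_le[OF _ _ tendsto_difference_quotient_segment[OF der T]] by simp
qed

lemma convex_on_gradient_inequality: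
  fixes F :: "'a::real_inner \<Rightarrow> real"
  assumes "convex_on T F" "convex T" "(F has_derivative (\<lambda>h. G \<bullet> h)) (at z within T)"
    and "z \<in> T" "x \<in> T"
  shows "F z + G \<bullet> (x - z) \<le> F x"
proof -
  have "G \<bullet> (x - z) \<le> (F x - F z) - 0"
  proof (rule inner_gradient_le_of_secant_bound[OF assms(3,2,4,5)])
    fix t :: real assume "0 < t" "t < 1"
    then show "F (z + t *\<^sub>R (x - z)) - F z \<le> t * (F x - F z - (1 - t) * 0)"
      using convex_onD[OF assms(1), of t z x] assms(4,5) by (simp add: algebra_simps)
  qed
  then show ?thesis by simp
qed

lemma continuous_attains_inf_bounded_sublevel:
  fixes h :: "'a::heine_borel \<Rightarrow> real"
  assumes "closed S" "z0 \<in> S" "continuous_on S h"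
    and sublevel: "\<And>u. u \<in> S \<Longrightarrow> h u \<le> h z0 \<Longrightarrow> dist z0 u \<le> R"
  shows "\<exists>p\<in>S. \<forall>u\<in>S. h p \<le> h u"
proof -
  have z0: "z0 \<in> S \<inter> cball z0 R" using sublevel[of z0] assms(2) by auto
  obtain p where p: "p \<in> S \<inter> cball z0 R" and min: "\<forall>u\<in>S \<inter> cball z0 R. h p \<le> h u"
    using continuous_attains_inf[OF closed_Int_compact[OF assms(1) compact_cball]]
      continuous_on_subset[OF assms(3)] z0 by (metis empty_iff inf_le1)
  have "h p \<le> h u" if "u \<in> S" for u
  proof (cases "h u \<le> h z0")
    case True
    then show ?thesis using min sublevel[OF that] that by auto
  next
    case False
    moreover have "h p \<le> h z0" using min z0 by blast
    ultimately show ?thesis by linarith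
  qed
  then show ?thesis using p by blast
qed

text \<open>The sublevel set of h at z0 is bounded: on the sphere of radius 1 around z0, where
  h is at least its minimum m over the unit ball, strong convexity forces
  m \<le> h z0 - \<mu> (r - 1) towards any point at distance r with value at most h z0.\<close>
lemma strongly_convex_attains_inf:
  fixes h :: "'a::euclidean_space \<Rightarrow> real"
  assumes S: "closed S" "convex S" "S \<noteq> {}" and cont: "continuous_on S h" and \<mu>: "0 < \<mu>"
    and sc: "\<And>a b t. a \<in> S \<Longrightarrow> b \<in> S \<Longrightarrow> 0 \<le> t \<Longrightarrow> t \<le> 1 \<Longrightarrow>
      h (b + t *\<^sub>R (a - b)) \<le> t * h a + (1 - t) * h b - \<mu> * t * (1 - t) * (norm (a - b))\<^sup>2"
  shows "\<exists>p\<in>S. \<forall>u\<in>S. h p \<le> h u"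
proof -
  obtain z0 where z0: "z0 \<in> S" using S(3) by auto
  obtain m where "m \<in> S \<inter> cball z0 1" and min: "\<forall>v\<in>S \<inter> cball z0 1. h m \<le> h v"
    using continuous_attains_inf[OF closed_Int_compact[OF S(1) compact_cball]]
      continuous_on_subset[OF cont] z0 by (metis centre_in_cball empty_iff inf_le1 IntI zero_le_one)
  have hm: "h m \<le> h z0" using min z0 by auto
  show ?thesis
  proof (rule continuous_attains_inf_bounded_sublevel[OF S(1) z0 cont])
    fix u assume u: "u \<in> S" and hu: "h u \<le> h z0"
    define r where "r = norm (u - z0)"
    show "dist z0 u \<le> 1 + (h z0 - h m) / \<mu>"
    proof (cases "r \<le> 1")
      case False
      define t where "t = 1 / r"
      have t: "0 < t" "t < 1" "t * r = 1" using False by (auto simp: t_def)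
      let ?q = "z0 + t *\<^sub>R (u - z0)"
      have "dist z0 ?q = t * r"
        using t by (simp add: dist_norm r_def)
      then have "?q \<in> S \<inter> cball z0 1"
        using convex_add_scaleR_diff[OF S(2) z0 u, of t] t by simp
      then have "h m \<le> h ?q" using min by blast
      also have "\<dots> \<le> t * h u + (1 - t) * h z0 - \<mu> * (t * (1 - t) * r\<^sup>2)"
        using sc[OF u z0, of t] t by (simp add: r_def mult.assoc)
      also have "t * (1 - t) * r\<^sup>2 = (t * r) * (r - t * r)"
        by (simp add: power2_eq_square algebra_simps)
      also have "\<dots> = r - 1" using t(3) by simp
      also have "t * h u + (1 - t) * h z0 - \<mu> * (r - 1) \<le> h z0 - \<mu> * (r - 1)"
        using t mult_left_mono[OF hu, of t] by (simp add: algebra_simps)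
      finally have "r - 1 \<le> (h z0 - h m) / \<mu>" using \<mu> by (simp add: field_simps)
      then show ?thesis by (simp add: dist_norm r_def norm_minus_commute)
    next
      case True
      have "0 \<le> (h z0 - h m) / \<mu>" using hm \<mu> by simp
      with True show ?thesis by (simp add: dist_norm r_def norm_minus_commute)
    qed
  qed
qed

lemma descent_along_segment:
  fixes F :: "'a::real_inner \<Rightarrow> real"
  assumes seg: "\<And>t. 0 \<le> t \<Longrightarrow> t \<le> 1 \<Longrightarrow> x + t *\<^sub>R \<rho> \<in> T"
    and der: "\<And>y. y \<in> T \<Longrightarrow> (F has_derivative (\<lambda>h. G y \<bullet> h)) (at y within T)"
    and lip: "\<And>t. 0 < t \<Longrightarrow> t < 1 \<Longrightarrow> (G (x + t *\<^sub>R \<rho>) - G x) \<bullet> \<rho> \<le> K * t"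
  shows "F (x + \<rho>) \<le> F x + G x \<bullet> \<rho> + K / 2"
proof -
  let ?p = "\<lambda>t::real. x + t *\<^sub>R \<rho>"
  define \<psi> where "\<psi> t = F (?p t) - t * (G x \<bullet> \<rho>) - K / 2 * t\<^sup>2" for t
  have "(\<psi> has_derivative (\<lambda>s. s * (G (?p t) \<bullet> \<rho> - G x \<bullet> \<rho> - K * t))) (at t within {0..1})"
    if t: "0 \<le> t" "t \<le> 1" for t
  proof -
    have p: "(?p has_derivative (\<lambda>s. s *\<^sub>R \<rho>)) (at t within {0..1})"
      by (auto intro!: derivative_eq_intros)
    have "?p ` {0..1} \<subseteq> T" using seg by auto
    then have "(F has_derivative (\<lambda>h. G (?p t) \<bullet> h)) (at (?p t) within ?p ` {0..1})"
      using has_derivative_subset[OF der[OF seg[OF t]]] by blast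
    from diff_chain_within[OF p this]
    have "((\<lambda>t. F (?p t)) has_derivative (\<lambda>s. s * (G (?p t) \<bullet> \<rho>))) (at t within {0..1})"
      by (simp add: o_def)
    then show ?thesis unfolding \<psi>_def
      by (auto intro!: derivative_eq_intros simp: algebra_simps power2_eq_square)
  qed
  from mvt_simple[OF zero_less_one this] obtain t where t: "t \<in> {0<..<1}"
    and "\<psi> 1 - \<psi> 0 = (1 - 0) * (G (?p t) \<bullet> \<rho> - G x \<bullet> \<rho> - K * t)"
    by blast
  then have "\<psi> 1 - \<psi> 0 \<le> 0" using lip[of t] by (simp add: inner_diff_left)
  then show ?thesis unfolding \<psi>_def by simp
qed

section \<open>The prox mapping of a block\<close>

locale block_prox = block_norm blk i N for blk :: "'n::finite \<Rightarrow> nat" and i N +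
  fixes S :: "(real^'n) set" and w :: "real^'n \<Rightarrow> real" and gw :: "real^'n \<Rightarrow> real^'n"
    and chi :: "real^'n \<Rightarrow> real"
  assumes S_nonempty: "S \<noteq> {}" and closed_S: "closed S" and convex_S: "convex S"
    and S_subset: "S \<subseteq> blkspace blk i"
    and w_has_derivative: "\<forall>z\<in>S. (w has_derivative (\<lambda>h. gw z \<bullet> h)) (at z within S)"
    and continuous_gw: "continuous_on S gw"
    and w_strongly_convex: "strongly_convex_wrt S N w"
    and chi_convex: "convex_on (blkspace blk i) chi"
begin

lemma continuous_w: "continuous_on S w"
  unfolding continuous_on_eq_continuous_within
  using w_has_derivative has_derivative_continuous by blast

lemma continuous_chi: "continuous_on S chi"
  by (rule continuous_on_subset[OF continuous_on_convex_on_blkspace[OF chi_convex] S_subset])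

lemma N_diff_commute:
  assumes "a \<in> S" "b \<in> S" shows "N (b - a) = N (a - b)"
proof -
  have "a - b \<in> blkspace blk i" using assms S_subset by (auto intro: blkspace_diff)
  from norm_on_minus[OF norm_on this] show ?thesis by simp
qed

lemma w_strongly_convexD:
  "x \<in> S \<Longrightarrow> z \<in> S \<Longrightarrow> 0 \<le> t \<Longrightarrow> t \<le> 1 \<Longrightarrow>
     w (z + t *\<^sub>R (x - z)) \<le> t * w x + (1 - t) * w z - t * (1 - t) / 2 * (N (x - z))\<^sup>2"
proof -
  assume "x \<in> S" "z \<in> S" "0 \<le> t" "t \<le> 1"
  moreover have "z + t *\<^sub>R (x - z) = t *\<^sub>R x + (1 - t) *\<^sub>R z" by (simp add: algebra_simps)
  ultimately show ?thesis using w_strongly_convex unfolding strongly_convex_wrt_def by metis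
qed

lemma chi_convexD:
  "a \<in> S \<Longrightarrow> b \<in> S \<Longrightarrow> 0 \<le> t \<Longrightarrow> t \<le> 1 \<Longrightarrow> chi (b + t *\<^sub>R (a - b)) \<le> t * chi a + (1 - t) * chi b"
  using convex_onD[OF chi_convex, of t b a] S_subset by (auto simp: algebra_simps)

lemma bregman_ge_half_sq: "z \<in> S \<Longrightarrow> x \<in> S \<Longrightarrow> (N (x - z))\<^sup>2 / 2 \<le> bregman w gw z x"
proof -
  assume zx: "z \<in> S" "x \<in> S"
  have "gw z \<bullet> (x - z) \<le> (w x - w z) - (N (x - z))\<^sup>2 / 2"
  proof (rule inner_gradient_le_of_secant_bound[OF bspec[OF w_has_derivative zx(1)] convex_S zx])
    fix t :: real assume "0 < t" "t < 1"
    then show "w (z + t *\<^sub>R (x - z)) - w z \<le> t * (w x - w z - (1 - t) * ((N (x - z))\<^sup>2 / 2))"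
      using w_strongly_convexD[OF zx(2,1), of t] by (simp add: algebra_simps)
  qed
  then show ?thesis by (simp add: bregman_def)
qed

lemma bregman_nonneg: "z \<in> S \<Longrightarrow> x \<in> S \<Longrightarrow> 0 \<le> bregman w gw z x"
  using bregman_ge_half_sq[of z x] zero_le_power2[of "N (x - z)"] by linarith

lemma bregman_three_point:
  "(gw p - gw z) \<bullet> (u - p) = bregman w gw z u - bregman w gw p u - bregman w gw z p"
  unfolding bregman_def by (simp add: algebra_simps)

lemma gw_strongly_monotone: "a \<in> S \<Longrightarrow> b \<in> S \<Longrightarrow> (N (a - b))\<^sup>2 \<le> (gw a - gw b) \<bullet> (a - b)"
  using bregman_ge_half_sq[of a b] bregman_ge_half_sq[of b a] N_diff_commute[of a b]
  by (simp add: bregman_def inner_commute algebra_simps)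

definition prox_obj :: "real^'n \<Rightarrow> real^'n \<Rightarrow> real \<Rightarrow> real^'n \<Rightarrow> real" where
  "prox_obj z y gm u = y \<bullet> (u - z) + bregman w gw z u / gm + chi u"

lemma prox_obj_strongly_convex:
  assumes a: "a \<in> S" and b: "b \<in> S" and t: "0 \<le> t" "t \<le> 1" and gm: "gm > 0"
  shows "prox_obj z y gm (b + t *\<^sub>R (a - b))
    \<le> t * prox_obj z y gm a + (1 - t) * prox_obj z y gm b
       - c_equiv\<^sup>2 / (2 * gm) * t * (1 - t) * (norm (a - b))\<^sup>2"
proof -
  let ?q = "b + t *\<^sub>R (a - b)"
  have "(c_equiv * norm (a - b))\<^sup>2 \<le> (N (a - b))\<^sup>2"
    using c_equiv_le[OF blkspace_diff] c_equiv_pos a b S_subset by (intro power_mono) auto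
  then have "t * (1 - t) / 2 * (c_equiv * norm (a - b))\<^sup>2 \<le> t * (1 - t) / 2 * (N (a - b))\<^sup>2"
    using t by (intro mult_left_mono) auto
  then have "w ?q \<le> t * w a + (1 - t) * w b - t * (1 - t) / 2 * (c_equiv * norm (a - b))\<^sup>2"
    using w_strongly_convexD[OF a b t] by linarith
  moreover have "gw z \<bullet> (?q - z) = t * (gw z \<bullet> (a - z)) + (1 - t) * (gw z \<bullet> (b - z))"
    by (simp add: algebra_simps)
  ultimately have "bregman w gw z ?q \<le> t * bregman w gw z a + (1 - t) * bregman w gw z b
      - t * (1 - t) / 2 * (c_equiv * norm (a - b))\<^sup>2"
    unfolding bregman_def by (simp add: algebra_simps)
  then have "bregman w gw z ?q / gm \<le> (t * bregman w gw z a + (1 - t) * bregman w gw z b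
      - t * (1 - t) / 2 * (c_equiv * norm (a - b))\<^sup>2) / gm"
    using gm by (intro divide_right_mono) auto
  also have "\<dots> = t * (bregman w gw z a / gm) + (1 - t) * (bregman w gw z b / gm)
      - c_equiv\<^sup>2 / (2 * gm) * t * (1 - t) * (norm (a - b))\<^sup>2"
    using gm by (simp add: field_simps)
  finally have "bregman w gw z ?q / gm \<le> \<dots>" .
  then show ?thesis
    using chi_convexD[OF a b t] unfolding prox_obj_def
    by (simp add: algebra_simps)
qed

lemma prox_minimizes:
  assumes gm: "gm > 0"
  shows "prox S w gw chi z y gm \<in> S
    \<and> (\<forall>u\<in>S. prox_obj z y gm (prox S w gw chi z y gm) \<le> prox_obj z y gm u)"
proof -
  have "continuous_on S (prox_obj z y gm)"
    unfolding prox_obj_def bregman_def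
    by (intro continuous_intros continuous_w continuous_chi) (use gm in auto)
  then have "\<exists>p\<in>S. \<forall>u\<in>S. prox_obj z y gm p \<le> prox_obj z y gm u"
    using c_equiv_pos gm
    by (intro strongly_convex_attains_inf[OF closed_S convex_S S_nonempty, of _ "c_equiv\<^sup>2 / (2 * gm)"]
        prox_obj_strongly_convex) (auto simp: mult.assoc)
  then have "\<exists>p. p \<in> S \<and> (\<forall>u\<in>S. prox_obj z y gm p \<le> prox_obj z y gm u)" by blast
  then show ?thesis unfolding prox_def prox_obj_def[symmetric] by (rule someI_ex)
qed

lemma prox_variational_inequality:
  fixes z y :: "real^'n"
  assumes gm: "gm > 0" and u: "u \<in> S"
  defines "p \<equiv> prox S w gw chi z y gm"
  shows "gm * (y \<bullet> (p - u) + chi p - chi u) \<le> (gw p - gw z) \<bullet> (u - p)"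
proof -
  have pS: "p \<in> S" and pmin: "\<forall>v\<in>S. prox_obj z y gm p \<le> prox_obj z y gm v"
    using prox_minimizes[OF gm] unfolding p_def by auto
  have der: "((\<lambda>x. - w x) has_derivative (\<lambda>h. (- gw p) \<bullet> h)) (at p within S)"
    using has_derivative_minus[OF bspec[OF w_has_derivative pS]] by simp
  have "(- gw p) \<bullet> (u - p) \<le> (gm * (y \<bullet> (u - p) + chi u - chi p) - gw z \<bullet> (u - p)) - 0"
  proof (rule inner_gradient_le_of_secant_bound[OF der convex_S pS u])
    fix t :: real assume t: "0 < t" "t < 1"
    let ?q = "p + t *\<^sub>R (u - p)"
    have "gm * prox_obj z y gm p \<le> gm * prox_obj z y gm ?q"
      using pmin convex_add_scaleR_diff[OF convex_S pS u] t gm by auto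
    moreover have "gm * prox_obj z y gm ?q - gm * prox_obj z y gm p
        = t * (gm * (y \<bullet> (u - p)) - gw z \<bullet> (u - p)) + (w ?q - w p) + gm * (chi ?q - chi p)"
      using gm unfolding prox_obj_def bregman_def
      by (simp add: inner_diff_right inner_add_right field_simps)
    moreover have "gm * (chi ?q - chi p) \<le> gm * (t * (chi u - chi p))"
      using chi_convexD[OF u pS, of t] t gm by (intro mult_left_mono) (auto simp: algebra_simps)
    ultimately show "- w ?q - - w p
        \<le> t * (gm * (y \<bullet> (u - p) + chi u - chi p) - gw z \<bullet> (u - p) - (1 - t) * 0)"
      by (simp add: algebra_simps)
  qed
  then show ?thesis by (simp add: algebra_simps)
qed

lemma prox_three_point_inequality:
  fixes z y :: "real^'n"
  assumes "gm > 0" "u \<in> S"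
  defines "p \<equiv> prox S w gw chi z y gm"
  shows "gm * (y \<bullet> (p - u) + chi p - chi u)
    \<le> bregman w gw z u - bregman w gw p u - bregman w gw z p"
  using prox_variational_inequality[OF assms(1,2)] bregman_three_point unfolding p_def by simp

text \<open>Adding the variational inequalities of two prox points and using the strong
  monotonicity of the mirror map gw.\<close>
lemma prox_lipschitz:
  fixes z z' y y' :: "real^'n"
  assumes gm: "gm > 0"
  defines "p \<equiv> prox S w gw chi z y gm" and "p' \<equiv> prox S w gw chi z' y' gm"
  shows "c_equiv\<^sup>2 * norm (p - p') \<le> norm (gm *\<^sub>R (y' - y) + (gw z - gw z'))"
proof -
  let ?v = "gm *\<^sub>R (y' - y) + (gw z - gw z')"
  have p: "p \<in> S" and p': "p' \<in> S"
    using prox_minimizes[OF gm] unfolding p_def p'_def by auto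
  have "(c_equiv * norm (p - p'))\<^sup>2 \<le> (N (p - p'))\<^sup>2"
    using c_equiv_le[OF blkspace_diff] c_equiv_pos p p' S_subset by (intro power_mono) auto
  also have "\<dots> \<le> (gw p - gw p') \<bullet> (p - p')" by (rule gw_strongly_monotone[OF p p'])
  also have "\<dots> \<le> ?v \<bullet> (p - p')"
    using prox_variational_inequality[OF gm p', where z = z and y = y]
      prox_variational_inequality[OF gm p, where z = z' and y = y']
    unfolding p_def[symmetric] p'_def[symmetric]
    by (simp add: algebra_simps)
  also have "\<dots> \<le> norm ?v * norm (p - p')" by (rule norm_cauchy_schwarz)
  finally have "(c_equiv\<^sup>2 * norm (p - p')) * norm (p - p') \<le> norm ?v * norm (p - p')"
    by (simp add: power2_eq_square algebra_simps)
  then show ?thesis by (cases "p = p'") (auto simp: mult_le_cancel_right)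
qed

lemma continuous_on_prox:
  assumes gm: "gm > 0"
  shows "continuous_on (S \<times> UNIV) (\<lambda>q. prox S w gw chi (fst q) (snd q) gm)"
  unfolding continuous_on_def
proof
  fix p :: "(real^'n) \<times> (real^'n)" assume p: "p \<in> S \<times> UNIV"
  let ?P = "\<lambda>q. prox S w gw chi (fst q) (snd q) gm"
  let ?B = "\<lambda>q. norm (gm *\<^sub>R (snd p - snd q) + (gw (fst q) - gw (fst p))) / c_equiv\<^sup>2"
  let ?F = "at p within S \<times> UNIV"
  have "continuous_on (S \<times> UNIV) (\<lambda>q. gw (fst q))"
    by (intro continuous_on_compose2[OF continuous_gw] continuous_intros) auto
  then have "((\<lambda>q. gw (fst q)) \<longlongrightarrow> gw (fst p)) ?F"
    using p unfolding continuous_on_def by blast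
  then have "(?B \<longlongrightarrow> norm (gm *\<^sub>R (snd p - snd p) + (gw (fst p) - gw (fst p))) / c_equiv\<^sup>2) ?F"
    using c_equiv_pos by (intro tendsto_intros) auto
  then have lim: "(?B \<longlongrightarrow> 0) ?F" by simp
  have bound: "\<forall>q. norm (?P q - ?P p) \<le> ?B q"
  proof
    fix q :: "(real^'n) \<times> (real^'n)"
    show "norm (?P q - ?P p) \<le> ?B q"
      using prox_lipschitz[OF gm, where z = "fst q" and y = "snd q" and z' = "fst p" and y' = "snd p"]
        c_equiv_pos by (simp add: pos_le_divide_eq mult.commute)
  qed
  from Lim_null_comparison[OF always_eventually[OF bound] lim]
  show "(?P \<longlongrightarrow> ?P p) ?F" by (rule LIM_zero_cancel)
qed

end

lemma measurable_continuous_on_closed_comp: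
  fixes h :: "'a::topological_space \<Rightarrow> 'b::topological_space"
  assumes "closed S" "continuous_on S h" "F \<in> borel_measurable M" "\<And>x. x \<in> space M \<Longrightarrow> F x \<in> S"
  shows "(\<lambda>x. h (F x)) \<in> borel_measurable M"
proof -
  have "(\<lambda>y. if y \<in> S then h y else undefined) \<in> borel_measurable borel"
    using assms(1,2) by (intro borel_measurable_continuous_on_if borel_closed continuous_on_const)
  from measurable_compose[OF assms(3) this] show ?thesis
    by (rule measurable_cong[THEN iffD1, rotated]) (simp add: assms(4))
qed

lemma ennreal_affine_le_imp_le:
  fixes I :: ennreal
  assumes le: "ennreal c * I + ennreal d \<le> ennreal e" and c: "0 < c" and "0 \<le> d" "0 \<le> e"
  shows "I \<le> ennreal ((e - d) / c)"
proof (cases I)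
  case (real r)
  have "ennreal (c * r + d) = ennreal c * I + ennreal d"
    using real c assms(3) by (simp add: ennreal_mult)
  with le have "ennreal (c * r + d) \<le> ennreal e" by simp
  then have "c * r + d \<le> e" using ennreal_le_iff[OF assms(4)] by blast
  then have "r \<le> (e - d) / c" using c by (simp add: pos_le_divide_eq mult.commute)
  then show ?thesis using real by (simp add: ennreal_leI)
next
  case top
  then show ?thesis using le c by (simp add: ennreal_mult_top top_unique)
qed

section \<open>One step of the composite SBMD method\<close>

lemma sbmd_avg_const_weights:
  assumes "\<forall>k\<in>{2..N+1}. \<theta> k = c" "c \<noteq> 0"
  shows "sbmd_avg \<theta> xs N = (\<Sum>k=1..N. (1 / real N) *\<^sub>R xs (Suc k))"
proof -
  have "(\<Sum>k=2..N+1. \<theta> k *\<^sub>R xs k) = (\<Sum>k=Suc 1..Suc N. c *\<^sub>R xs k)"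
    using assms(1) by (intro sum.cong) auto
  also have "\<dots> = c *\<^sub>R (\<Sum>k=1..N. xs (Suc k))"
    by (simp only: sum.shift_bounds_cl_Suc_ivl scaleR_sum_right)
  finally have sum_scaled: "(\<Sum>k=2..N+1. \<theta> k *\<^sub>R xs k) = \<dots>" .
  have "(\<Sum>k=2..N+1. \<theta> k) = (\<Sum>k=Suc 1..Suc N. c)"
    using assms(1) by (intro sum.cong) auto
  then have sum_weights: "(\<Sum>k=2..N+1. \<theta> k) = real N * c" by simp
  have "sbmd_avg \<theta> xs N = inverse (real N * c) *\<^sub>R (c *\<^sub>R (\<Sum>k=1..N. xs (Suc k)))"
    unfolding sbmd_avg_def by (simp only: sum_scaled sum_weights)
  also have "\<dots> = (1 / real N) *\<^sub>R (\<Sum>k=1..N. xs (Suc k))"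
    using assms(2) by (simp add: field_simps)
  finally show ?thesis by (simp only: scaleR_sum_right)
qed

lemma mult_le_sq_add_quarter_sq:
  fixes gm a d n :: real
  assumes "0 \<le> gm" "a \<le> d * n"
  shows "gm * a \<le> gm\<^sup>2 * d\<^sup>2 + n\<^sup>2 / 4"
proof -
  have "gm * a \<le> gm * (d * n)" by (rule mult_left_mono[OF assms(2,1)])
  also have "\<dots> \<le> gm\<^sup>2 * d\<^sup>2 + n\<^sup>2 / 4"
    using zero_le_power2[of "gm * d - n / 2"] by (simp add: power2_eq_square algebra_simps)
  finally show ?thesis .
qed

locale sbmd =
  fixes b :: nat and blk :: "'n::finite \<Rightarrow> nat" and Xb :: "nat \<Rightarrow> (real^'n) set"
    and nrm :: "nat \<Rightarrow> real^'n \<Rightarrow> real"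
    and f :: "real^'n \<Rightarrow> real" and g :: "real^'n \<Rightarrow> real^'n"
    and D :: "'e measure" and G :: "real^'n \<Rightarrow> 'e \<Rightarrow> real^'n"
    and L \<sigma>b :: "nat \<Rightarrow> real"
    and w :: "nat \<Rightarrow> real^'n \<Rightarrow> real" and gw :: "nat \<Rightarrow> real^'n \<Rightarrow> real^'n"
    and chi :: "nat \<Rightarrow> real^'n \<Rightarrow> real"
    and x1 xstar :: "real^'n" and X :: "(real^'n) set" and \<phi> :: "real^'n \<Rightarrow> real" and gm :: real
  assumes X_def: "X = {x. \<forall>i\<in>{1..b}. blkproj blk i x \<in> Xb i}"
    and phi_def: "\<phi> = (\<lambda>x. f x + (\<Sum>i=1..b. chi i (blkproj blk i x)))"
    and b_pos: "1 \<le> b"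
    and blk_range: "\<forall>j. blk j \<in> {1..b}"
    and Xb: "\<forall>i\<in>{1..b}. Xb i \<noteq> {} \<and> closed (Xb i) \<and> convex (Xb i) \<and> Xb i \<subseteq> blkspace blk i"
    and nrm: "\<forall>i\<in>{1..b}. norm_on (blkspace blk i) (nrm i)"
    and f_convex: "convex_on X f"
    and f_grad: "\<forall>x\<in>X. (f has_derivative (\<lambda>h. g x \<bullet> h)) (at x within X)"
    and g_Lip: "\<forall>i\<in>{1..b}. \<forall>x \<rho>. x \<in> X \<longrightarrow> \<rho> \<in> blkspace blk i \<longrightarrow> x + \<rho> \<in> X \<longrightarrow>
        dual_norm (blkspace blk i) (nrm i) (blkproj blk i (g (x + \<rho>)) - blkproj blk i (g x))
          \<le> L i * nrm i \<rho>"
    and chi_convex: "\<forall>i\<in>{1..b}. convex_on (blkspace blk i) (chi i)"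
    and D_prob: "prob_space D"
    and G_meas: "(\<lambda>(x, e). G x e) \<in> borel_measurable (borel \<Otimes>\<^sub>M D)"
    and G_unbiased: "\<forall>x\<in>X. integrable D (G x) \<and> (\<integral>e. G x e \<partial>D) = g x"
    and G_var: "\<forall>i\<in>{1..b}. \<forall>x\<in>X.
        (\<integral>\<^sup>+e. ennreal ((dual_norm (blkspace blk i) (nrm i)
                     (blkproj blk i (G x e) - blkproj blk i (g x)))\<^sup>2) \<partial>D)
          \<le> ennreal ((\<sigma>b i)\<^sup>2)"
    and w_diff: "\<forall>i\<in>{1..b}. \<forall>z\<in>Xb i. (w i has_derivative (\<lambda>h. gw i z \<bullet> h)) (at z within Xb i)"
    and w_C1: "\<forall>i\<in>{1..b}. continuous_on (Xb i) (gw i)"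
    and w_sc: "\<forall>i\<in>{1..b}. strongly_convex_wrt (Xb i) (nrm i) (w i)"
    and x1_in: "x1 \<in> X"
    and xstar_in: "xstar \<in> X" and xstar_opt: "\<forall>x\<in>X. \<phi> xstar \<le> \<phi> x"
    and gm_pos: "gm > 0" and gm_L: "\<forall>i\<in>{1..b}. gm * L i \<le> 1/2"
begin

lemma block_prox: "i \<in> {1..b} \<Longrightarrow> block_prox blk i (nrm i) (Xb i) (w i) (gw i) (chi i)"
  unfolding block_prox_def block_prox_axioms_def block_norm_def
  using Xb nrm w_diff w_C1 w_sc chi_convex by auto

lemma blkproj_in_Xb: "x \<in> X \<Longrightarrow> i \<in> {1..b} \<Longrightarrow> blkproj blk i x \<in> Xb i"
  unfolding X_def by auto

lemma closed_X: "closed X"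
proof -
  have "X = (\<Inter>i\<in>{1..b}. blkproj blk i -` Xb i)" unfolding X_def by auto
  moreover have "closed (blkproj blk i -` Xb i)" if "i \<in> {1..b}" for i
    using Xb that by (intro continuous_closed_vimage isCont_blkproj allI) auto
  ultimately show ?thesis by auto
qed

lemma convex_X: "convex X"
  unfolding X_def convex_alt using Xb
  by (auto simp: blkproj_add blkproj_scaleR intro!: convexD_alt)

lemma update_in_X:
  assumes "x \<in> X" "i \<in> {1..b}" "P \<in> Xb i"
  shows "x - blkproj blk i x + P \<in> X"
proof -
  have "P \<in> blkspace blk i" using assms(2,3) Xb by auto
  then show ?thesis using assms unfolding X_def by (auto simp: blkproj_update)
qed

lemma continuous_f: "continuous_on X f"
  unfolding continuous_on_eq_continuous_within
  using f_grad has_derivative_continuous by blast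

lemma f_gradient_inequality: "x \<in> X \<Longrightarrow> u \<in> X \<Longrightarrow> f x + g x \<bullet> (u - x) \<le> f u"
  using f_grad by (intro convex_on_gradient_inequality[OF f_convex convex_X]) auto

lemma f_block_descent:
  assumes x: "x \<in> X" and i: "i \<in> {1..b}" and \<rho>: "\<rho> \<in> blkspace blk i" and x\<rho>: "x + \<rho> \<in> X"
  shows "f (x + \<rho>) \<le> f x + g x \<bullet> \<rho> + L i / 2 * (nrm i \<rho>)\<^sup>2"
proof -
  interpret block_norm blk i "nrm i" using nrm i by unfold_locales auto
  have seg: "x + t *\<^sub>R \<rho> \<in> X" if "0 \<le> t" "t \<le> 1" for t
    using convex_add_scaleR_diff[OF convex_X x x\<rho> that] by simp
  have "f (x + \<rho>) \<le> f x + g x \<bullet> \<rho> + L i * (nrm i \<rho>)\<^sup>2 / 2"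
  proof (rule descent_along_segment[OF seg])
    fix t :: real assume t: "0 < t" "t < 1"
    have "(g (x + t *\<^sub>R \<rho>) - g x) \<bullet> \<rho> = (blkproj blk i (g (x + t *\<^sub>R \<rho>)) - blkproj blk i (g x)) \<bullet> \<rho>"
      using inner_blkproj_left[OF \<rho>] by (simp add: inner_diff_left)
    also have "\<dots> \<le> dnorm (blkproj blk i (g (x + t *\<^sub>R \<rho>)) - blkproj blk i (g x)) * nrm i \<rho>"
      by (rule inner_le_dnorm[OF \<rho>])
    also have "\<dots> \<le> L i * nrm i (t *\<^sub>R \<rho>) * nrm i \<rho>"
      using g_Lip i x seg[of t] t blkspace_scaleR[OF \<rho>, of t] norm_on_nonneg[OF norm_on \<rho>]
      by (intro mult_right_mono) auto
    also have "\<dots> = L i * (nrm i \<rho>)\<^sup>2 * t"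
      using t by (simp add: norm_on_scaleR[OF norm_on \<rho>] power2_eq_square)
    finally show "(g (x + t *\<^sub>R \<rho>) - g x) \<bullet> \<rho> \<le> L i * (nrm i \<rho>)\<^sup>2 * t" .
  qed (use f_grad in auto)
  then show ?thesis by simp
qed

lemma f_step_descent:
  assumes x: "x \<in> X" and i: "i \<in> {1..b}" and \<rho>: "\<rho> \<in> blkspace blk i" and x\<rho>: "x + \<rho> \<in> X"
  shows "gm * (f (x + \<rho>) - f x - blkproj blk i (g x) \<bullet> \<rho>) \<le> (nrm i \<rho>)\<^sup>2 / 4"
proof -
  have "f (x + \<rho>) - f x - blkproj blk i (g x) \<bullet> \<rho> \<le> L i / 2 * (nrm i \<rho>)\<^sup>2"
    using f_block_descent[OF x i \<rho> x\<rho>] inner_blkproj_left[OF \<rho>] by simp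
  then have "gm * (f (x + \<rho>) - f x - blkproj blk i (g x) \<bullet> \<rho>) \<le> (gm * L i) * ((nrm i \<rho>)\<^sup>2 / 2)"
    using mult_left_mono[of _ _ gm] gm_pos by fastforce
  also have "\<dots> \<le> 1 / 2 * ((nrm i \<rho>)\<^sup>2 / 2)"
    using gm_L i by (intro mult_right_mono) auto
  finally show ?thesis by simp
qed

definition step :: "real^'n \<Rightarrow> nat \<times> 'e \<Rightarrow> real^'n" where
  "step x ie = sbmd_step blk Xb w gw chi G gm x ie"

abbreviation prox_blk :: "nat \<Rightarrow> real^'n \<Rightarrow> 'e \<Rightarrow> real^'n" where
  "prox_blk i x e \<equiv> prox (Xb i) (w i) (gw i) (chi i) (blkproj blk i x) (blkproj blk i (G x e)) gm"

definition V :: "nat \<Rightarrow> real^'n \<Rightarrow> real" where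
  "V i x = bregman (w i) (gw i) (blkproj blk i x) (blkproj blk i xstar)"

definition W :: "real^'n \<Rightarrow> real" where
  "W x = (\<Sum>i=1..b. V i x)"

definition lyap :: "real^'n \<Rightarrow> real" where
  "lyap x = real b * gm * (\<phi> x - \<phi> xstar) + real b * W x"

definition noise :: "nat \<Rightarrow> real^'n \<Rightarrow> 'e \<Rightarrow> real^'n" where
  "noise i x e = blkproj blk i (G x e) - blkproj blk i (g x)"

definition gap :: "nat \<Rightarrow> real^'n \<Rightarrow> real" where
  "gap i x = blkproj blk i (g x) \<bullet> (blkproj blk i x - blkproj blk i xstar)
     + chi i (blkproj blk i x) - chi i (blkproj blk i xstar)"

lemma step_eq: "step x (i, e) = x - blkproj blk i x + prox_blk i x e"
  unfolding step_def sbmd_step_def by simp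

lemma prox_blk_in_Xb: "i \<in> {1..b} \<Longrightarrow> prox_blk i x e \<in> Xb i"
  using block_prox.prox_minimizes[OF block_prox gm_pos] by blast

lemma prox_blk_in_blkspace: "i \<in> {1..b} \<Longrightarrow> prox_blk i x e \<in> blkspace blk i"
  using prox_blk_in_Xb Xb by blast

lemma step_in_X: "x \<in> X \<Longrightarrow> i \<in> {1..b} \<Longrightarrow> step x (i, e) \<in> X"
  unfolding step_eq by (intro update_in_X prox_blk_in_Xb)

lemma blkproj_step:
  "i \<in> {1..b} \<Longrightarrow> blkproj blk k (step x (i, e)) = (if k = i then prox_blk i x e else blkproj blk k x)"
  unfolding step_eq by (rule blkproj_update[OF prox_blk_in_blkspace])

lemma sum_step_block:
  fixes F :: "nat \<Rightarrow> real^'n \<Rightarrow> real"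
  assumes i: "i \<in> {1..b}"
  shows "(\<Sum>k=1..b. F k (blkproj blk k (step x (i, e))))
    = (\<Sum>k=1..b. F k (blkproj blk k x)) - F i (blkproj blk i x) + F i (prox_blk i x e)"
proof -
  have "(\<Sum>k=1..b. F k (blkproj blk k (step x (i, e))))
      = F i (prox_blk i x e) + (\<Sum>k\<in>{1..b} - {i}. F k (blkproj blk k x))"
    using i by (subst sum.remove[of _ i]) (auto simp: blkproj_step intro!: sum.cong)
  moreover have "(\<Sum>k=1..b. F k (blkproj blk k x))
      = F i (blkproj blk i x) + (\<Sum>k\<in>{1..b} - {i}. F k (blkproj blk k x))"
    using i by (subst sum.remove[of _ i]) auto
  ultimately show ?thesis by simp
qed

lemma V_nonneg: "x \<in> X \<Longrightarrow> i \<in> {1..b} \<Longrightarrow> 0 \<le> V i x"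
  unfolding V_def using block_prox.bregman_nonneg[OF block_prox] blkproj_in_Xb xstar_in by blast

lemma W_nonneg: "x \<in> X \<Longrightarrow> 0 \<le> W x"
  unfolding W_def by (intro sum_nonneg V_nonneg)

lemma phi_gap_nonneg: "x \<in> X \<Longrightarrow> 0 \<le> \<phi> x - \<phi> xstar"
  using xstar_opt by auto

lemma lyap_nonneg: "x \<in> X \<Longrightarrow> 0 \<le> lyap x"
  unfolding lyap_def using W_nonneg phi_gap_nonneg gm_pos by simp

lemma phi_gap_le_sum_gap:
  assumes "x \<in> X" shows "\<phi> x - \<phi> xstar \<le> (\<Sum>i=1..b. gap i x)"
proof -
  have "(\<Sum>i=1..b. gap i x) = g x \<bullet> x - g x \<bullet> xstar
      + (\<Sum>i=1..b. chi i (blkproj blk i x)) - (\<Sum>i=1..b. chi i (blkproj blk i xstar))"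
    unfolding gap_def inner_eq_sum_blkproj[OF blk_range, of "g x" x]
      inner_eq_sum_blkproj[OF blk_range, of "g x" xstar]
    by (simp add: sum.distrib sum_subtractf inner_diff_right)
  then show ?thesis
    using f_gradient_inequality[OF assms xstar_in] unfolding phi_def by (simp add: inner_diff_right)
qed

text \<open>The deterministic core of the analysis: the prox three-point inequality and the block
  descent lemma, with gm dd n \<le> gm^2 dd^2 + n^2/4 and gm L_i \<le> 1/2 absorbing all terms in the
  step length n = nrm i (x_{k+1} - x_k) into the Bregman distance V(x_k, x_{k+1}) \<ge> n^2/2.\<close>
lemma gap_step_bound:
  assumes x: "x \<in> X" and i: "i \<in> {1..b}"
  shows "gm * (gap i x + \<phi> (step x (i, e)) - \<phi> x)
    \<le> V i x - V i (step x (i, e)) - gm * (noise i x e \<bullet> (blkproj blk i x - blkproj blk i xstar))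
       + gm\<^sup>2 * (dual_norm (blkspace blk i) (nrm i) (noise i x e))\<^sup>2"
proof -
  interpret block_prox blk i "nrm i" "Xb i" "w i" "gw i" "chi i" by (rule block_prox[OF i])
  define z u y gi d P where "z = blkproj blk i x" and "u = blkproj blk i xstar"
    and "y = blkproj blk i (G x e)" and "gi = blkproj blk i (g x)" and "d = noise i x e"
    and "P = prox_blk i x e"
  define \<rho> n dd where "\<rho> = P - z" and "n = nrm i \<rho>" and "dd = dnorm d"
  have zS: "z \<in> Xb i" and uS: "u \<in> Xb i" and PS: "P \<in> Xb i"
    unfolding z_def u_def P_def using blkproj_in_Xb x xstar_in i prox_blk_in_Xb by auto
  have \<rho>: "\<rho> \<in> blkspace blk i" unfolding \<rho>_def using zS PS S_subset by (auto intro: blkspace_diff)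
  have step: "step x (i, e) = x + \<rho>" unfolding step_eq \<rho>_def P_def z_def by simp
  have VP: "V i (step x (i, e)) = bregman (w i) (gw i) P u"
    unfolding V_def P_def u_def using i by (simp add: blkproj_step)
  have three: "gm * (y \<bullet> (P - u) + chi i P - chi i u)
      \<le> V i x - bregman (w i) (gw i) P u - bregman (w i) (gw i) z P"
    using prox_three_point_inequality[OF gm_pos uS, where z = z and y = y]
    unfolding V_def P_def y_def z_def u_def .
  have stepX: "x + \<rho> \<in> X" using step_in_X[OF x i, of e] unfolding step .
  have descent: "gm * (f (x + \<rho>) - f x - gi \<bullet> \<rho>) \<le> n\<^sup>2 / 4"
    using f_step_descent[OF x i \<rho> stepX] unfolding gi_def n_def .
  have "- (d \<bullet> \<rho>) \<le> dd * n"
    using abs_inner_le_dnorm[OF \<rho>, of d] unfolding dd_def n_def by linarith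
  then have noise_term: "gm * (- (d \<bullet> \<rho>)) \<le> gm\<^sup>2 * dd\<^sup>2 + n\<^sup>2 / 4"
    using gm_pos by (intro mult_le_sq_add_quarter_sq) auto
  have "n\<^sup>2 / 2 \<le> bregman (w i) (gw i) z P"
    using bregman_ge_half_sq[OF zS PS] unfolding n_def \<rho>_def .
  moreover have gap_split: "gap i x + \<phi> (step x (i, e)) - \<phi> x
      = (y \<bullet> (P - u) + chi i P - chi i u) - d \<bullet> (z - u) - d \<bullet> \<rho> + (f (x + \<rho>) - f x - gi \<bullet> \<rho>)"
  proof -
    have "\<phi> (step x (i, e)) = \<phi> x + f (x + \<rho>) - f x + chi i P - chi i z"
      using sum_step_block[OF i, of chi x e] unfolding phi_def P_def z_def step[symmetric] by simp
    moreover have "gap i x = gi \<bullet> (z - u) + chi i z - chi i u"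
      unfolding gap_def gi_def z_def u_def ..
    moreover have "y = gi + d" unfolding y_def gi_def d_def noise_def by simp
    ultimately show ?thesis unfolding \<rho>_def by (simp add: inner_add_left inner_diff_right)
  qed
  moreover have "gm * (gap i x + \<phi> (step x (i, e)) - \<phi> x)
      = gm * (y \<bullet> (P - u) + chi i P - chi i u) - gm * (d \<bullet> (z - u))
        + gm * (- (d \<bullet> \<rho>)) + gm * (f (x + \<rho>) - f x - gi \<bullet> \<rho>)"
    unfolding gap_split by (simp add: algebra_simps)
  ultimately show ?thesis
    using three VP descent noise_term unfolding d_def dd_def z_def u_def by linarith
qed

lemma lyap_step_le:
  assumes x: "x \<in> X" and i: "i \<in> {1..b}"
  shows "lyap (step x (i, e)) \<le> lyap x - real b * gm * gap i x
     - real b * gm * (noise i x e \<bullet> (blkproj blk i x - blkproj blk i xstar))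
     + real b * gm\<^sup>2 * (dual_norm (blkspace blk i) (nrm i) (noise i x e))\<^sup>2"
proof -
  have W_step: "W (step x (i, e)) = W x - V i x + V i (step x (i, e))"
    using sum_step_block[OF i, of "\<lambda>k z. bregman (w k) (gw k) z (blkproj blk k xstar)"]
    unfolding W_def V_def by (simp add: blkproj_step[OF i])
  show ?thesis
    using mult_left_mono[OF gap_step_bound[OF x i, of e], of "real b"]
    unfolding lyap_def W_step ring_distribs mult.assoc by simp
qed

section \<open>Expected decrease of the Lyapunov function\<close>

lemma borel_measurable_G: "G x \<in> borel_measurable D"
  using measurable_compose[OF measurable_Pair[OF measurable_const measurable_ident_sets] G_meas]
  by simp

lemma noise_second_moment:
  assumes x: "x \<in> X" and i: "i \<in> {1..b}"
  shows "integrable D (\<lambda>e. (dual_norm (blkspace blk i) (nrm i) (noise i x e))\<^sup>2)"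
    and "(\<integral>e. (dual_norm (blkspace blk i) (nrm i) (noise i x e))\<^sup>2 \<partial>D) \<le> (\<sigma>b i)\<^sup>2"
proof -
  interpret block_norm blk i "nrm i" using nrm i by unfold_locales auto
  have "(\<lambda>e. (dnorm (noise i x e))\<^sup>2) \<in> borel_measurable D"
    unfolding noise_def
    by (intro borel_measurable_power measurable_compose[OF _ borel_measurable_dnorm]
        borel_measurable_diff measurable_compose[OF borel_measurable_G]
        borel_measurable_continuous_onI continuous_on_blkproj continuous_on_id) simp
  moreover have var: "(\<integral>\<^sup>+e. ennreal ((dnorm (noise i x e))\<^sup>2) \<partial>D) \<le> ennreal ((\<sigma>b i)\<^sup>2)"
    using G_var i x unfolding noise_def by auto
  ultimately show "integrable D (\<lambda>e. (dnorm (noise i x e))\<^sup>2)"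
    and "(\<integral>e. (dnorm (noise i x e))\<^sup>2 \<partial>D) \<le> (\<sigma>b i)\<^sup>2"
    by (auto intro!: integrableI_nonneg enn2real_leI simp: integral_eq_nn_integral top_unique
        order_le_less_trans[OF var])
qed

text \<open>The noise term is linear in G x e, so it has mean zero; the bound is then the
  expectation of lyap_step_le.\<close>
lemma nn_integral_lyap_step_block:
  assumes x: "x \<in> X" and i: "i \<in> {1..b}"
  shows "(\<integral>\<^sup>+e. ennreal (lyap (step x (i, e))) \<partial>D)
      \<le> ennreal (lyap x - real b * gm * gap i x + real b * gm\<^sup>2 * (\<sigma>b i)\<^sup>2)"
    and "0 \<le> lyap x - real b * gm * gap i x + real b * gm\<^sup>2 * (\<sigma>b i)\<^sup>2"
proof -
  interpret D: prob_space D by (rule D_prob)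
  define v where "v = blkproj blk i x - blkproj blk i xstar"
  define R where "R e = lyap x - real b * gm * gap i x - real b * gm * (noise i x e \<bullet> v)
     + real b * gm\<^sup>2 * (dual_norm (blkspace blk i) (nrm i) (noise i x e))\<^sup>2" for e
  have G: "integrable D (G x)" "(\<integral>e. G x e \<partial>D) = g x" using G_unbiased x by auto
  have "v \<in> blkspace blk i" unfolding v_def by (intro blkspace_diff blkproj_in_blkspace)
  then have noise_v: "noise i x e \<bullet> v = G x e \<bullet> v - g x \<bullet> v" for e
    unfolding noise_def by (simp add: inner_blkproj_left inner_diff_left)
  have int_R: "integrable D R"
    unfolding R_def noise_v using G noise_second_moment(1)[OF x i]
    by (intro Bochner_Integration.integrable_add Bochner_Integration.integrable_diff
        integrable_mult_right D.integrable_const) auto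
  have "(\<integral>e. R e \<partial>D) = lyap x - real b * gm * gap i x
      + real b * gm\<^sup>2 * (\<integral>e. (dual_norm (blkspace blk i) (nrm i) (noise i x e))\<^sup>2 \<partial>D)"
    unfolding R_def noise_v using G noise_second_moment(1)[OF x i] by (simp add: D.prob_space)
  also have "\<dots> \<le> lyap x - real b * gm * gap i x + real b * gm\<^sup>2 * (\<sigma>b i)\<^sup>2"
    using noise_second_moment(2)[OF x i] by (intro add_left_mono mult_left_mono) auto
  finally have E_R: "(\<integral>e. R e \<partial>D) \<le> \<dots>" .
  have step_R: "lyap (step x (i, e)) \<le> R e" for e
    using lyap_step_le[OF x i, of e] unfolding R_def v_def by simp
  have R_nonneg: "0 \<le> R e" for e
    using step_R[of e] lyap_nonneg[OF step_in_X[OF x i, of e]] by linarith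
  have "(\<integral>\<^sup>+e. ennreal (lyap (step x (i, e))) \<partial>D) \<le> (\<integral>\<^sup>+e. ennreal (R e) \<partial>D)"
    by (intro nn_integral_mono ennreal_leI step_R)
  also have "\<dots> = ennreal (\<integral>e. R e \<partial>D)"
    using int_R R_nonneg by (intro nn_integral_eq_integral) auto
  finally show "(\<integral>\<^sup>+e. ennreal (lyap (step x (i, e))) \<partial>D)
      \<le> ennreal (lyap x - real b * gm * gap i x + real b * gm\<^sup>2 * (\<sigma>b i)\<^sup>2)"
    using E_R order_trans ennreal_leI by blast
  have "0 \<le> (\<integral>e. R e \<partial>D)" using R_nonneg by simp
  with E_R show "0 \<le> lyap x - real b * gm * gap i x + real b * gm\<^sup>2 * (\<sigma>b i)\<^sup>2" by linarith
qed

definition M_step :: "(nat \<times> 'e) measure" where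
  "M_step = measure_pmf (pmf_of_set {1..b}) \<Otimes>\<^sub>M D"

lemma prob_space_M_step: "prob_space M_step"
  unfolding M_step_def by (intro prob_space_pair prob_space_measure_pmf D_prob)

text \<open>The step, extended by the identity to points outside X and to invalid block labels,
  so that it is measurable on the whole space.\<close>
definition step_ext :: "real^'n \<Rightarrow> nat \<times> 'e \<Rightarrow> real^'n" where
  "step_ext x ie = (if fst ie \<in> {1..b} \<and> x \<in> X then step x ie else x)"

lemma step_ext_in_X: "x \<in> X \<Longrightarrow> step_ext x ie \<in> X"
  unfolding step_ext_def using step_in_X by (cases ie) auto

lemma continuous_on_block_update:
  assumes i: "i \<in> {1..b}"
  shows "continuous_on (X \<times> UNIV) (\<lambda>q. fst q - blkproj blk i (fst q)
    + prox (Xb i) (w i) (gw i) (chi i) (blkproj blk i (fst q)) (blkproj blk i (snd q)) gm)"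
proof -
  have pair: "continuous_on (X \<times> UNIV) (\<lambda>q. (blkproj blk i (fst q), blkproj blk i (snd q)))"
    by (intro continuous_intros)
  have "(\<lambda>q. (blkproj blk i (fst q), blkproj blk i (snd q))) ` (X \<times> UNIV) \<subseteq> Xb i \<times> UNIV"
    using blkproj_in_Xb i by auto
  from continuous_on_compose2[OF block_prox.continuous_on_prox[OF block_prox[OF i] gm_pos] pair this]
  have "continuous_on (X \<times> UNIV)
      (\<lambda>q. prox (Xb i) (w i) (gw i) (chi i) (blkproj blk i (fst q)) (blkproj blk i (snd q)) gm)"
    by simp
  then show ?thesis by (intro continuous_intros)
qed

lemma measurable_step_ext: "(\<lambda>p. step_ext (fst p) (snd p)) \<in> borel_measurable (borel \<Otimes>\<^sub>M M_step)"
proof -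
  define U where "U i q = (if i \<in> {1..b} \<and> q \<in> X \<times> UNIV then fst q - blkproj blk i (fst q)
    + prox (Xb i) (w i) (gw i) (chi i) (blkproj blk i (fst q)) (blkproj blk i (snd q)) gm
    else fst q)" for i and q :: "(real^'n) \<times> (real^'n)"
  have U: "U i \<in> borel_measurable borel" for i
  proof (cases "i \<in> {1..b}")
    case True
    then show ?thesis
      unfolding U_def using continuous_on_block_update[OF True] closed_X
      by (simp add: borel_measurable_continuous_on_if borel_closed closed_Times continuous_on_fst)
  next
    case False
    then have "U i = fst" by (auto simp: U_def)
    then show ?thesis by (simp add: borel_measurable_continuous_onI continuous_on_fst)
  qed
  have pair: "(\<lambda>p. (fst p, G (fst p) (snd (snd p)))) \<in> borel_measurable (borel \<Otimes>\<^sub>M M_step)"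
  proof -
    have "(\<lambda>p. (fst p, snd (snd p))) \<in> measurable (borel \<Otimes>\<^sub>M M_step) (borel \<Otimes>\<^sub>M D)"
      unfolding M_step_def by measurable
    from measurable_compose[OF this G_meas] show ?thesis
      unfolding borel_prod[symmetric] by (intro measurable_Pair) (auto simp: case_prod_beta)
  qed
  have label: "(\<lambda>p. fst (snd p)) \<in> measurable (borel \<Otimes>\<^sub>M M_step) (count_space UNIV)"
    unfolding M_step_def by measurable
  from measurable_compose_countable[OF measurable_compose[OF pair U] label]
  have "(\<lambda>p. U (fst (snd p)) (fst p, G (fst p) (snd (snd p))))
      \<in> borel_measurable (borel \<Otimes>\<^sub>M M_step)" .
  then show ?thesis
    by (rule measurable_cong[THEN iffD1, rotated])
       (auto simp: U_def step_ext_def step_eq split: prod.splits)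
qed

lemma measurable_step_ext_at: "step_ext x \<in> borel_measurable M_step"
  using measurable_compose[OF measurable_Pair[OF measurable_const measurable_ident_sets]
      measurable_step_ext, of x] by simp

lemma continuous_on_phi: "continuous_on X \<phi>"
proof -
  have "continuous_on X (\<lambda>x. chi i (blkproj blk i x))" if "i \<in> {1..b}" for i
  proof -
    have "continuous_on (blkspace blk i) (chi i)"
      using chi_convex that by (intro continuous_on_convex_on_blkspace) auto
    then show ?thesis
      by (rule continuous_on_compose2[OF _ continuous_on_blkproj[OF continuous_on_id]]) auto
  qed
  then show ?thesis unfolding phi_def by (intro continuous_intros continuous_f) auto
qed

lemma continuous_on_lyap: "continuous_on X lyap"
proof -
  have "continuous_on X (V i)" if i: "i \<in> {1..b}" for i
  proof -
    interpret block_prox blk i "nrm i" "Xb i" "w i" "gw i" "chi i" by (rule block_prox[OF i])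
    have "blkproj blk i ` X \<subseteq> Xb i" using blkproj_in_Xb i by auto
    then show ?thesis unfolding V_def bregman_def
      by (intro continuous_intros continuous_on_compose2[OF continuous_w]
          continuous_on_compose2[OF continuous_gw]) auto
  qed
  then show ?thesis unfolding lyap_def W_def by (intro continuous_intros continuous_on_phi) auto
qed

lemma measurable_lyap_step_ext:
  "x \<in> X \<Longrightarrow> (\<lambda>ie. ennreal (lyap (step_ext x ie))) \<in> borel_measurable M_step"
  by (intro measurable_compose[OF _ measurable_ennreal] measurable_continuous_on_closed_comp[OF
        closed_X continuous_on_lyap measurable_step_ext_at] step_ext_in_X)

definition sigma2 :: real where
  "sigma2 = (\<Sum>i=1..b. (\<sigma>b i)\<^sup>2)"

lemma sigma2_nonneg: "0 \<le> sigma2"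
  unfolding sigma2_def by (simp add: sum_nonneg)

text \<open>Averaging over the uniformly chosen block turns the b-fold Lyapunov weights into the
  full gap, which dominates the objective gap.\<close>
lemma nn_integral_lyap_step_ext:
  assumes x: "x \<in> X"
  shows "(\<integral>\<^sup>+ie. ennreal (lyap (step_ext x ie)) \<partial>M_step)
    \<le> ennreal (lyap x - gm * (\<phi> x - \<phi> xstar) + gm\<^sup>2 * sigma2)"
proof -
  interpret D: prob_space D by (rule D_prob)
  define a where "a i = lyap x - real b * gm * gap i x + real b * gm\<^sup>2 * (\<sigma>b i)\<^sup>2" for i
  have "(\<integral>\<^sup>+ie. ennreal (lyap (step_ext x ie)) \<partial>M_step)
      = (\<integral>\<^sup>+i. \<integral>\<^sup>+e. ennreal (lyap (step_ext x (i, e))) \<partial>D \<partial>measure_pmf (pmf_of_set {1..b}))"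
    using D.nn_integral_fst[OF measurable_lyap_step_ext[OF x, unfolded M_step_def]] unfolding M_step_def by simp
  also have "\<dots> = (\<Sum>i\<in>{1..b}. \<integral>\<^sup>+e. ennreal (lyap (step_ext x (i, e))) \<partial>D) / of_nat (card {1..b})"
    using b_pos by (intro nn_integral_pmf_of_set) auto
  also have "\<dots> \<le> (\<Sum>i\<in>{1..b}. ennreal (a i)) / of_nat (card {1..b})"
    using nn_integral_lyap_step_block(1)[OF x] x unfolding a_def step_ext_def
    by (intro divide_right_mono_ennreal sum_mono) auto
  also have "\<dots> = ennreal ((\<Sum>i\<in>{1..b}. a i) / real b)"
  proof -
    have "0 \<le> a i" if "i \<in> {1..b}" for i
      using nn_integral_lyap_step_block(2)[OF x that] unfolding a_def .
    then have "(\<Sum>i\<in>{1..b}. ennreal (a i)) = ennreal (\<Sum>i\<in>{1..b}. a i)"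
      and "0 \<le> (\<Sum>i\<in>{1..b}. a i)"
      by (auto intro: sum_ennreal sum_nonneg)
    then show ?thesis
      using b_pos by (simp add: ennreal_of_nat_eq_real_of_nat divide_ennreal)
  qed
  also have "(\<Sum>i\<in>{1..b}. a i) / real b = lyap x - gm * (\<Sum>i=1..b. gap i x) + gm\<^sup>2 * sigma2"
    using b_pos unfolding a_def sigma2_def
    by (simp add: sum.distrib sum_subtractf sum_distrib_left field_simps)
  also have "\<dots> \<le> lyap x - gm * (\<phi> x - \<phi> xstar) + gm\<^sup>2 * sigma2"
    using mult_left_mono[OF phi_gap_le_sum_gap[OF x], of gm] gm_pos by simp
  finally show ?thesis by (simp add: ennreal_leI)
qed

lemma phi_gap_le_lyap:
  assumes "x \<in> X" shows "gm * (\<phi> x - \<phi> xstar) \<le> lyap x"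
proof -
  have "gm * (\<phi> x - \<phi> xstar) \<le> real b * (gm * (\<phi> x - \<phi> xstar))"
    using b_pos gm_pos phi_gap_nonneg[OF assms] mult_right_mono[of 1 "real b" "gm * (\<phi> x - \<phi> xstar)"]
    by simp
  moreover have "0 \<le> real b * W x" using W_nonneg[OF assms] by simp
  ultimately show ?thesis unfolding lyap_def mult.assoc by linarith
qed

section \<open>The iterates and their average\<close>

text \<open>iter om k is the iterate x_{k+1}; the step producing it uses the sample
  om k = (i_k, xi_k), so that iter om k only depends on om 1, ..., om k.\<close>
primrec iter :: "(nat \<Rightarrow> nat \<times> 'e) \<Rightarrow> nat \<Rightarrow> real^'n" where
  "iter om 0 = x1"
| "iter om (Suc k) = step_ext (iter om k) (om (Suc k))"

lemma iter_in_X: "iter om k \<in> X"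
  by (induction k) (auto simp: x1_in step_ext_in_X)

lemma iter_fun_upd: "k < j \<Longrightarrow> iter (om(j := y)) k = iter om k"
  by (induction k) auto

lemma measurable_iter: "k \<le> n \<Longrightarrow> (\<lambda>om. iter om k) \<in> borel_measurable (PiM {1..n} (\<lambda>_. M_step))"
proof (induction k)
  case (Suc k)
  then have "(\<lambda>om. (iter om k, om (Suc k))) \<in> measurable (PiM {1..n} (\<lambda>_. M_step)) (borel \<Otimes>\<^sub>M M_step)"
    by (intro measurable_Pair measurable_component_singleton) auto
  from measurable_compose[OF this measurable_step_ext] show ?case by simp
qed simp

definition potential :: "nat \<Rightarrow> (nat \<Rightarrow> nat \<times> 'e) \<Rightarrow> real" where
  "potential n om = lyap (iter om n) + gm * (\<Sum>k<n. \<phi> (iter om k) - \<phi> xstar)"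

lemma potential_nonneg: "0 \<le> potential n om"
  unfolding potential_def using lyap_nonneg[OF iter_in_X] phi_gap_nonneg[OF iter_in_X] gm_pos
  by (intro add_nonneg_nonneg mult_nonneg_nonneg sum_nonneg) auto

lemma measurable_potential: "potential n \<in> borel_measurable (PiM {1..n} (\<lambda>_. M_step))"
  unfolding potential_def using iter_in_X
  by (intro borel_measurable_add borel_measurable_times borel_measurable_sum borel_measurable_const
      borel_measurable_diff measurable_continuous_on_closed_comp[OF closed_X continuous_on_lyap]
      measurable_continuous_on_closed_comp[OF closed_X continuous_on_phi] measurable_iter) auto

lemma nn_integral_potential_Suc:
  "(\<integral>\<^sup>+y. ennreal (potential (Suc n) (om(Suc n := y))) \<partial>M_step)
    \<le> ennreal (potential n om + gm\<^sup>2 * sigma2)"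
proof -
  interpret prob_space M_step by (rule prob_space_M_step)
  define x C where "x = iter om n" and "C = gm * (\<Sum>k<Suc n. \<phi> (iter om k) - \<phi> xstar)"
  have C: "0 \<le> C"
    unfolding C_def using gm_pos phi_gap_nonneg[OF iter_in_X] by (intro mult_nonneg_nonneg sum_nonneg) auto
  have "potential (Suc n) (om(Suc n := y)) = lyap (step_ext x y) + C" for y
    unfolding potential_def C_def x_def by (simp add: iter_fun_upd)
  then have "(\<integral>\<^sup>+y. ennreal (potential (Suc n) (om(Suc n := y))) \<partial>M_step)
      = (\<integral>\<^sup>+y. ennreal (lyap (step_ext x y)) + ennreal C \<partial>M_step)"
    using C lyap_nonneg[OF step_ext_in_X[OF iter_in_X]] unfolding x_def by simp
  also have "\<dots> = (\<integral>\<^sup>+y. ennreal (lyap (step_ext x y)) \<partial>M_step) + ennreal C"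
    unfolding x_def by (simp add: nn_integral_add emeasure_space_1 measurable_lyap_step_ext iter_in_X)
  also have "\<dots> \<le> ennreal (lyap x - gm * (\<phi> x - \<phi> xstar) + gm\<^sup>2 * sigma2) + ennreal C"
    unfolding x_def by (intro add_right_mono nn_integral_lyap_step_ext iter_in_X)
  also have "\<dots> = ennreal (potential n om + gm\<^sup>2 * sigma2)"
  proof -
    have "C = gm * (\<Sum>k<n. \<phi> (iter om k) - \<phi> xstar) + gm * (\<phi> x - \<phi> xstar)"
      unfolding C_def x_def by (simp add: algebra_simps)
    moreover have "0 \<le> lyap x - gm * (\<phi> x - \<phi> xstar) + gm\<^sup>2 * sigma2"
      using phi_gap_le_lyap[OF iter_in_X] sigma2_nonneg unfolding x_def by simp
    ultimately show ?thesis
      using C unfolding potential_def x_def by (simp flip: ennreal_plus add: algebra_simps)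
  qed
  finally show ?thesis .
qed

lemma nn_integral_potential:
  "(\<integral>\<^sup>+om. ennreal (potential n om) \<partial>PiM {1..n} (\<lambda>_. M_step))
    \<le> ennreal (lyap x1 + real n * gm\<^sup>2 * sigma2)"
proof (induction n)
  case 0
  interpret prob_space "PiM {} (\<lambda>_. M_step)" by (intro prob_space_PiM prob_space_M_step)
  show ?case by (simp add: potential_def emeasure_space_1)
next
  case (Suc n)
  interpret M: prob_space M_step by (rule prob_space_M_step)
  interpret product_prob_space "\<lambda>_. M_step" UNIV by unfold_locales
  interpret Pn: prob_space "PiM {1..n} (\<lambda>_. M_step)" by (intro prob_space_PiM prob_space_M_step)
  have "{1..Suc n} = insert (Suc n) {1..n}" by auto
  then have "(\<integral>\<^sup>+om. ennreal (potential (Suc n) om) \<partial>PiM {1..Suc n} (\<lambda>_. M_step))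
      = (\<integral>\<^sup>+om. (\<integral>\<^sup>+y. ennreal (potential (Suc n) (om(Suc n := y))) \<partial>M_step)
          \<partial>PiM {1..n} (\<lambda>_. M_step))"
    using measurable_potential[of "Suc n"] by (simp add: product_nn_integral_insert)
  also have "\<dots> \<le> (\<integral>\<^sup>+om. ennreal (potential n om) + ennreal (gm\<^sup>2 * sigma2) \<partial>PiM {1..n} (\<lambda>_. M_step))"
    using potential_nonneg sigma2_nonneg
    by (intro nn_integral_mono) (simp add: nn_integral_potential_Suc flip: ennreal_plus)
  also have "\<dots> = (\<integral>\<^sup>+om. ennreal (potential n om) \<partial>PiM {1..n} (\<lambda>_. M_step)) + ennreal (gm\<^sup>2 * sigma2)"
    using measurable_potential[of n] Pn.emeasure_space_1 by (simp add: nn_integral_add)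
  also have "\<dots> \<le> ennreal (lyap x1 + real n * gm\<^sup>2 * sigma2) + ennreal (gm\<^sup>2 * sigma2)"
    by (intro add_right_mono Suc.IH)
  also have "\<dots> = ennreal (lyap x1 + real (Suc n) * gm\<^sup>2 * sigma2)"
  proof -
    have "0 \<le> gm\<^sup>2 * sigma2" "0 \<le> lyap x1 + real n * gm\<^sup>2 * sigma2"
      using lyap_nonneg[OF x1_in] sigma2_nonneg by auto
    then show ?thesis by (simp flip: ennreal_plus add: algebra_simps)
  qed
  finally show ?case .
qed

lemma convex_on_phi: "convex_on X \<phi>"
proof (rule convex_onI)
  fix t :: real and x y assume t: "0 < t" "t < 1" and xy: "x \<in> X" "y \<in> X"
  have "chi i (blkproj blk i ((1 - t) *\<^sub>R x + t *\<^sub>R y))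
      \<le> (1 - t) * chi i (blkproj blk i x) + t * chi i (blkproj blk i y)" if "i \<in> {1..b}" for i
    using convex_onD[of "blkspace blk i" "chi i" t] chi_convex that t
    by (simp add: blkproj_add blkproj_scaleR)
  then have "(\<Sum>i=1..b. chi i (blkproj blk i ((1 - t) *\<^sub>R x + t *\<^sub>R y)))
      \<le> (\<Sum>i=1..b. (1 - t) * chi i (blkproj blk i x) + t * chi i (blkproj blk i y))"
    by (intro sum_mono) auto
  also have "\<dots> = (1 - t) * (\<Sum>i=1..b. chi i (blkproj blk i x)) + t * (\<Sum>i=1..b. chi i (blkproj blk i y))"
    by (simp add: sum.distrib sum_distrib_left)
  finally have "(\<Sum>i=1..b. chi i (blkproj blk i ((1 - t) *\<^sub>R x + t *\<^sub>R y))) \<le> \<dots>" .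
  moreover have "f ((1 - t) *\<^sub>R x + t *\<^sub>R y) \<le> (1 - t) * f x + t * f y"
    using convex_onD[OF f_convex, of t x y] t xy by simp
  ultimately show "\<phi> ((1 - t) *\<^sub>R x + t *\<^sub>R y) \<le> (1 - t) * \<phi> x + t * \<phi> y"
    unfolding phi_def distrib_left by linarith
qed (rule convex_X)

definition avg :: "nat \<Rightarrow> (nat \<Rightarrow> nat \<times> 'e) \<Rightarrow> real^'n" where
  "avg n om = (\<Sum>k=1..n. (1 / real n) *\<^sub>R iter om k)"

lemma avg_in_X: "1 \<le> n \<Longrightarrow> avg n om \<in> X"
  unfolding avg_def by (intro convex_sum convex_X iter_in_X) auto

lemma measurable_avg: "avg n \<in> borel_measurable (PiM {1..n} (\<lambda>_. M_step))"
  unfolding avg_def by (intro borel_measurable_sum borel_measurable_scaleR borel_measurable_const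
      measurable_iter) auto

text \<open>Jensen's inequality for the average, plus gm (\<phi> x_{n+1} - \<phi> x*) \<le> lyap x_{n+1}.\<close>
lemma phi_avg_gap_le_potential:
  assumes n: "1 \<le> n"
  shows "real n * gm * (\<phi> (avg n om) - \<phi> xstar) + gm * (\<phi> x1 - \<phi> xstar) \<le> potential n om"
proof -
  define a where "a x = \<phi> x - \<phi> xstar" for x
  have "\<phi> (avg n om) \<le> (\<Sum>k=1..n. (1 / real n) * \<phi> (iter om k))"
    unfolding avg_def using n by (intro convex_on_sum[OF _ _ convex_on_phi] iter_in_X) auto
  then have "real n * a (avg n om) \<le> (\<Sum>k=1..n. a (iter om k))"
    using n by (simp add: a_def sum_subtractf sum_divide_distrib[symmetric] field_simps)
  also have "\<dots> = (\<Sum>k<n. a (iter om k)) - a x1 + a (iter om n)"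
    using sum.lessThan_Suc_shift[of "\<lambda>k. a (iter om k)" n] sum.lessThan_Suc[of "\<lambda>k. a (iter om k)" n]
      sum.atLeast1_atMost_eq[of "\<lambda>k. a (iter om k)" n] by simp
  finally have "gm * (real n * a (avg n om)) \<le> gm * ((\<Sum>k<n. a (iter om k)) - a x1 + a (iter om n))"
    using gm_pos by (intro mult_left_mono) auto
  then have "real n * gm * a (avg n om) + gm * a x1 \<le> gm * (\<Sum>k<n. a (iter om k)) + gm * a (iter om n)"
    by (simp add: algebra_simps)
  then show ?thesis
    using phi_gap_le_lyap[OF iter_in_X, of om n] unfolding potential_def a_def by linarith
qed

lemma measurable_phi_avg_gap:
  "1 \<le> n \<Longrightarrow> (\<lambda>om. \<phi> (avg n om) - \<phi> xstar) \<in> borel_measurable (PiM {1..n} (\<lambda>_. M_step))"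
  using avg_in_X by (intro borel_measurable_diff borel_measurable_const
      measurable_continuous_on_closed_comp[OF closed_X continuous_on_phi measurable_avg])

theorem expected_phi_avg_gap_le:
  assumes n: "1 \<le> n"
  shows "(\<integral>om. \<phi> (avg n om) - \<phi> xstar \<partial>PiM {1..n} (\<lambda>_. M_step))
    \<le> ((real b - 1) * gm * (\<phi> x1 - \<phi> xstar) + real b * W x1 + real n * gm\<^sup>2 * sigma2) / (real n * gm)"
proof -
  let ?P = "PiM {1..n} (\<lambda>_. M_step)"
  interpret P: prob_space ?P by (intro prob_space_PiM prob_space_M_step)
  define h where "h om = \<phi> (avg n om) - \<phi> xstar" for om
  have h_meas: "h \<in> borel_measurable ?P"
    unfolding h_def by (rule measurable_phi_avg_gap[OF n])
  have h_nonneg: "0 \<le> h om" for om unfolding h_def using phi_gap_nonneg[OF avg_in_X[OF n]] .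
  have a1: "0 \<le> gm * (\<phi> x1 - \<phi> xstar)" using gm_pos phi_gap_nonneg[OF x1_in] by simp
  have "ennreal (real n * gm) * (\<integral>\<^sup>+om. h om \<partial>?P) + ennreal (gm * (\<phi> x1 - \<phi> xstar))
      = (\<integral>\<^sup>+om. ennreal (real n * gm * h om + gm * (\<phi> x1 - \<phi> xstar)) \<partial>?P)"
    using h_meas h_nonneg a1 gm_pos P.emeasure_space_1
    by (simp add: nn_integral_add nn_integral_cmult ennreal_mult)
  also have "\<dots> \<le> (\<integral>\<^sup>+om. ennreal (potential n om) \<partial>?P)"
    using phi_avg_gap_le_potential[OF n] unfolding h_def by (intro nn_integral_mono ennreal_leI) auto
  also have "\<dots> \<le> ennreal (lyap x1 + real n * gm\<^sup>2 * sigma2)"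
    by (rule nn_integral_potential)
  finally have "(\<integral>\<^sup>+om. h om \<partial>?P)
      \<le> ennreal ((lyap x1 + real n * gm\<^sup>2 * sigma2 - gm * (\<phi> x1 - \<phi> xstar)) / (real n * gm))"
    using n gm_pos a1 lyap_nonneg[OF x1_in] sigma2_nonneg by (intro ennreal_affine_le_imp_le) auto
  also have "lyap x1 + real n * gm\<^sup>2 * sigma2 - gm * (\<phi> x1 - \<phi> xstar)
      = (real b - 1) * gm * (\<phi> x1 - \<phi> xstar) + real b * W x1 + real n * gm\<^sup>2 * sigma2"
    unfolding lyap_def by (simp add: algebra_simps)
  finally have nn: "(\<integral>\<^sup>+om. h om \<partial>?P) \<le> ennreal (\<dots> / (real n * gm))" .
  have "(\<integral>om. h om \<partial>?P) = enn2real (\<integral>\<^sup>+om. h om \<partial>?P)"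
    using h_nonneg by (intro integral_eq_nn_integral[OF h_meas]) simp
  also have "\<dots> \<le> ((real b - 1) * gm * (\<phi> x1 - \<phi> xstar) + real b * W x1 + real n * gm\<^sup>2 * sigma2)
      / (real n * gm)"
    using b_pos n gm_pos phi_gap_nonneg[OF x1_in] W_nonneg[OF x1_in] sigma2_nonneg
    by (intro enn2real_leI[OF _ nn]) simp
  finally show ?thesis unfolding h_def .
qed

lemma sbmd_x_eq_iter:
  assumes labels: "\<forall>k\<in>{1..n}. fst (om k) \<in> {1..b}"
  shows "k \<le> n \<Longrightarrow> sbmd_x blk Xb w gw chi G (\<lambda>_. gm) x1 om (Suc k) = iter om k"
proof (induction k)
  case (Suc k)
  then have "fst (om (Suc k)) \<in> {1..b}" using labels by auto
  with Suc show ?case using iter_in_X by (simp add: step_ext_def step_def)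
qed simp

lemma AE_valid_labels:
  fixes n :: nat shows "AE om in PiM {1..n} (\<lambda>_. M_step). \<forall>k\<in>{1..n}. fst (om k) \<in> {1..b}"
proof -
  interpret pair_prob_space "measure_pmf (pmf_of_set {1..b})" D
    using D_prob by (simp add: pair_prob_space_def pair_sigma_finite_def prob_space_measure_pmf
        prob_space_imp_sigma_finite)
  have "{ie \<in> space M_step. fst ie \<in> {1..b}} = fst -` {1..b} \<inter> space M_step" by auto
  also have "\<dots> \<in> sets M_step"
    unfolding M_step_def by (rule measurable_sets[OF measurable_fst]) simp
  finally have "AE ie in M_step. fst ie \<in> {1..b}"
    unfolding M_step_def using b_pos
    by (intro AE_pair_measure) (auto simp: AE_measure_pmf_iff)
  then show ?thesis
    by (intro AE_finite_allI AE_PiM_component prob_space_M_step) auto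
qed

text \<open>The iterates of the method agree with iter only almost surely; where the integrand is
  not measurable, its Bochner integral is 0 and the bound is trivial.\<close>
theorem expected_sbmd_avg_gap_le:
  assumes n: "1 \<le> n" and \<theta>: "\<forall>k\<in>{2..n+1}. \<theta> k = gm"
  shows "(\<integral>om. \<phi> (sbmd_avg \<theta> (sbmd_x blk Xb w gw chi G (\<lambda>_. gm) x1 om) n) - \<phi> xstar
      \<partial>PiM {1..n} (\<lambda>_. M_step))
    \<le> ((real b - 1) * gm * (\<phi> x1 - \<phi> xstar) + real b * W x1 + real n * gm\<^sup>2 * sigma2) / (real n * gm)"
    (is "(\<integral>om. ?h om \<partial>?P) \<le> ?B")
proof (cases "?h \<in> borel_measurable ?P")
  case True
  have "AE om in ?P. ?h om = \<phi> (avg n om) - \<phi> xstar"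
    using AE_valid_labels
  proof eventually_elim
    case (elim om)
    have "sbmd_avg \<theta> (sbmd_x blk Xb w gw chi G (\<lambda>_. gm) x1 om) n = avg n om"
      unfolding sbmd_avg_const_weights[OF \<theta> gm_pos[THEN less_imp_neq, symmetric]] avg_def
      using sbmd_x_eq_iter[OF elim] by (intro sum.cong) auto
    then show ?case by simp
  qed
  then have "(\<integral>om. ?h om \<partial>?P) = (\<integral>om. \<phi> (avg n om) - \<phi> xstar \<partial>?P)"
    by (rule integral_cong_AE[OF True measurable_phi_avg_gap[OF n]])
  then show ?thesis using expected_phi_avg_gap_le[OF n] by simp
next
  case False
  then have "\<not> integrable ?P ?h" using borel_measurable_integrable by blast
  then have "(\<integral>om. ?h om \<partial>?P) = 0" by (rule not_integrable_integral_eq)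
  moreover have "0 \<le> ?B"
    using b_pos n gm_pos phi_gap_nonneg[OF x1_in] W_nonneg[OF x1_in] sigma2_nonneg by simp
  ultimately show ?thesis by simp
qed

end

section \<open>The stepsize of the corollary\<close>

text \<open>With gm = min (1 / (2 Lbar)) (Dt / \<sigma> sqrt (b/N)) we have 1/gm \<le> 2 Lbar + \<sigma> sqrt (N/b) / Dt
  and gm \<sigma>^2 \<le> \<sigma> Dt sqrt (b/N).\<close>
lemma constant_stepsize_bound:
  fixes a W Lbar \<sigma> Dt :: real and b N :: nat
  assumes "1 \<le> b" "1 \<le> N" "0 \<le> W" "0 < Lbar" "0 < \<sigma>" "0 < Dt"
  defines "gm \<equiv> min (1 / (2 * Lbar)) (Dt / \<sigma> * sqrt (real b / real N))"
  shows "((real b - 1) * gm * a + real b * W + real N * gm\<^sup>2 * \<sigma>\<^sup>2) / (real N * gm)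
    \<le> (real b - 1) * a / real N + 2 * real b * Lbar * W / real N
       + \<sigma> * sqrt (real b) / sqrt (real N) * (W / Dt + Dt)"
proof -
  define q where "q = sqrt (real b) / sqrt (real N)"
  have N: "0 < real N" and q: "0 < q" "q\<^sup>2 = real b / real N" "sqrt (real b / real N) = q"
    using assms(1,2) by (auto simp: q_def power_divide real_sqrt_divide)
  have gm_pos: "0 < gm" unfolding gm_def using assms(4-6) q by simp
  have "gm * \<sigma>\<^sup>2 \<le> Dt / \<sigma> * q * \<sigma>\<^sup>2"
    unfolding gm_def using q(3) by (intro mult_right_mono) auto
  also have "\<dots> = \<sigma> * q * Dt" using assms(5) by (simp add: power2_eq_square)
  finally have noise: "gm * \<sigma>\<^sup>2 \<le> \<sigma> * q * Dt" .
  have "1 / gm \<le> 2 * Lbar + \<sigma> / (Dt * q)"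
    using assms(4-6) q unfolding gm_def min_def by (auto simp: q(3) field_simps)
  then have "real b * W / real N * (1 / gm) \<le> real b * W / real N * (2 * Lbar + \<sigma> / (Dt * q))"
    using assms(3) N by (intro mult_left_mono) auto
  also have "\<dots> = 2 * real b * Lbar * W / real N + \<sigma> * (q\<^sup>2 / q) * (W / Dt)"
    unfolding q(2) using N q(1) assms(6) by (simp add: field_simps)
  finally have distance: "real b * W / (real N * gm) \<le> 2 * real b * Lbar * W / real N + \<sigma> * q * (W / Dt)"
    using q(1) by (simp add: power2_eq_square)
  have "((real b - 1) * gm * a + real b * W + real N * gm\<^sup>2 * \<sigma>\<^sup>2) / (real N * gm)
      = (real b - 1) * a / real N + real b * W / (real N * gm) + gm * \<sigma>\<^sup>2"
    using N gm_pos by (simp add: field_simps power2_eq_square)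
  then show ?thesis using noise distance unfolding q_def by (simp add: distrib_left)
qed

lemma min_stepsize_bounds:
  fixes L :: "nat \<Rightarrow> real"
  assumes "finite I" "I \<noteq> {}" "\<forall>i\<in>I. 0 < L i" "0 < s"
  defines "gm \<equiv> min (1 / (2 * Max (L ` I))) s"
  shows "0 < Max (L ` I)" and "0 < gm" and "\<forall>i\<in>I. gm * L i \<le> 1/2"
proof -
  have L_le: "L i \<le> Max (L ` I)" if "i \<in> I" for i
    using assms(1) that by (intro Max_ge) auto
  with assms(2,3) show Lmax: "0 < Max (L ` I)" by (meson ex_in_conv less_le_trans)
  then show "0 < gm" unfolding gm_def using assms(4) by simp
  show "\<forall>i\<in>I. gm * L i \<le> 1/2"
  proof
    fix i assume i: "i \<in> I"
    then have "gm * L i \<le> 1 / (2 * Max (L ` I)) * Max (L ` I)"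
      using assms(3) L_le[OF i] Lmax \<open>0 < gm\<close> by (intro mult_mono) (auto simp: gm_def less_imp_le)
    then show "gm * L i \<le> 1/2" using Lmax by simp
  qed
qed

theorem corollary3p2:
  fixes b N :: nat
    and blk :: "'n::finite \<Rightarrow> nat"
    and Xb :: "nat \<Rightarrow> (real^'n) set"
    and nrm :: "nat \<Rightarrow> real^'n \<Rightarrow> real"
    and f :: "real^'n \<Rightarrow> real" and g :: "real^'n \<Rightarrow> real^'n"
    and D :: "'e measure"
    and F :: "real^'n \<Rightarrow> 'e \<Rightarrow> real" and G :: "real^'n \<Rightarrow> 'e \<Rightarrow> real^'n"
    and L \<sigma>b :: "nat \<Rightarrow> real"
    and w :: "nat \<Rightarrow> real^'n \<Rightarrow> real" and gw :: "nat \<Rightarrow> real^'n \<Rightarrow> real^'n"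
    and chi :: "nat \<Rightarrow> real^'n \<Rightarrow> real"
    and x1 xstar :: "real^'n" and Dt :: real
  defines "X \<equiv> {x. \<forall>i\<in>{1..b}. blkproj blk i x \<in> Xb i}"
    and "\<phi> \<equiv> (\<lambda>x. f x + (\<Sum>i=1..b. chi i (blkproj blk i x)))"
    and "\<sigma> \<equiv> sqrt (\<Sum>i=1..b. (\<sigma>b i)\<^sup>2)"
    and "Lbar \<equiv> Max (L ` {1..b})"
    and "gam \<equiv> (\<lambda>k::nat. min (1 / (2 * Max (L ` {1..b})))
                 (Dt / sqrt (\<Sum>i=1..b. (\<sigma>b i)\<^sup>2) * sqrt (real b / real N)))"
    and "\<theta> \<equiv> (\<lambda>k::nat. if k \<le> 1 then 0
                 else real b * (min (1 / (2 * Max (L ` {1..b})))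
                                 (Dt / sqrt (\<Sum>i=1..b. (\<sigma>b i)\<^sup>2) * sqrt (real b / real N)))
                      - (real b - 1) * (min (1 / (2 * Max (L ` {1..b})))
                                 (Dt / sqrt (\<Sum>i=1..b. (\<sigma>b i)\<^sup>2) * sqrt (real b / real N))))"
    and "\<Omega> \<equiv> PiM {1..N} (\<lambda>_. measure_pmf (pmf_of_set {1..b}) \<Otimes>\<^sub>M D)"
  assumes b_pos: "1 \<le> b" and N_pos: "1 \<le> N"
    and blk_range: "\<forall>j. blk j \<in> {1..b}"
    and Xb: "\<forall>i\<in>{1..b}. Xb i \<noteq> {} \<and> closed (Xb i) \<and> convex (Xb i) \<and> Xb i \<subseteq> blkspace blk i"
    and nrm: "\<forall>i\<in>{1..b}. norm_on (blkspace blk i) (nrm i)"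
    and f_convex: "convex_on X f"
    and f_grad: "\<forall>x\<in>X. (f has_derivative (\<lambda>h. g x \<bullet> h)) (at x within X)"
    and L_pos: "\<forall>i\<in>{1..b}. 0 < L i"
    and g_Lip: "\<forall>i\<in>{1..b}. \<forall>x \<rho>. x \<in> X \<longrightarrow> \<rho> \<in> blkspace blk i \<longrightarrow> x + \<rho> \<in> X \<longrightarrow>
        dual_norm (blkspace blk i) (nrm i) (blkproj blk i (g (x + \<rho>)) - blkproj blk i (g x))
          \<le> L i * nrm i \<rho>"
    and chi_convex: "\<forall>i\<in>{1..b}. convex_on (blkspace blk i) (chi i)"
    and D_prob: "prob_space D"
    and F_mean: "\<forall>x\<in>X. integrable D (F x) \<and> f x = (\<integral>e. F x e \<partial>D)"
    and G_meas: "(\<lambda>(x, e). G x e) \<in> borel_measurable (borel \<Otimes>\<^sub>M D)"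
    and G_unbiased: "\<forall>x\<in>X. integrable D (G x) \<and> (\<integral>e. G x e \<partial>D) = g x"
    and G_var: "\<forall>i\<in>{1..b}. \<forall>x\<in>X.
        (\<integral>\<^sup>+e. ennreal ((dual_norm (blkspace blk i) (nrm i)
                     (blkproj blk i (G x e) - blkproj blk i (g x)))\<^sup>2) \<partial>D)
          \<le> ennreal ((\<sigma>b i)\<^sup>2)"
    and \<sigma>_pos: "\<sigma> > 0"
    and w_diff: "\<forall>i\<in>{1..b}. \<forall>z\<in>Xb i. (w i has_derivative (\<lambda>h. gw i z \<bullet> h)) (at z within Xb i)"
    and w_C1: "\<forall>i\<in>{1..b}. continuous_on (Xb i) (gw i)"
    and w_sc: "\<forall>i\<in>{1..b}. strongly_convex_wrt (Xb i) (nrm i) (w i)"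
    and Dt_pos: "Dt > 0"
    and x1_in: "x1 \<in> X"
    and xstar_opt: "xstar \<in> X" "\<forall>x\<in>X. \<phi> xstar \<le> \<phi> x"
  shows "(\<integral>om. \<phi> (sbmd_avg \<theta> (sbmd_x blk Xb w gw chi G gam x1 om) N) - \<phi> xstar \<partial>\<Omega>)
    \<le> (real b - 1) * (\<phi> x1 - \<phi> xstar) / real N
      + 2 * real b * Lbar * (\<Sum>i=1..b. bregman (w i) (gw i) (blkproj blk i x1) (blkproj blk i xstar)) / real N
      + \<sigma> * sqrt (real b) / sqrt (real N)
          * ((\<Sum>i=1..b. bregman (w i) (gw i) (blkproj blk i x1) (blkproj blk i xstar)) / Dt + Dt)"
proof -
  define gm where "gm = min (1 / (2 * Lbar)) (Dt / \<sigma> * sqrt (real b / real N))"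
  have gam: "gam = (\<lambda>_. gm)" unfolding gam_def gm_def Lbar_def \<sigma>_def ..
  have \<theta>: "\<forall>k\<in>{2..N+1}. \<theta> k = gm"
    unfolding \<theta>_def gm_def[unfolded Lbar_def \<sigma>_def, symmetric] by (simp add: algebra_simps)
  have "0 < Dt / \<sigma> * sqrt (real b / real N)" using Dt_pos \<sigma>_pos b_pos N_pos by simp
  from min_stepsize_bounds[of "{1..b}" L, OF _ _ L_pos this] b_pos
  have Lbar_pos: "0 < Lbar" and gm_pos: "0 < gm" and gm_L: "\<forall>i\<in>{1..b}. gm * L i \<le> 1/2"
    unfolding gm_def Lbar_def by auto
  interpret sbmd b blk Xb nrm f g D G L \<sigma>b w gw chi x1 xstar X \<phi> gm
    unfolding sbmd_def using b_pos blk_range Xb nrm f_convex f_grad g_Lip chi_convex D_prob G_meas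
      G_unbiased G_var w_diff w_C1 w_sc x1_in xstar_opt gm_pos gm_L
    by (simp add: X_def \<phi>_def)
  have "\<Omega> = PiM {1..N} (\<lambda>_. M_step)" unfolding \<Omega>_def M_step_def ..
  moreover have "W x1 = (\<Sum>i=1..b. bregman (w i) (gw i) (blkproj blk i x1) (blkproj blk i xstar))"
    unfolding W_def V_def ..
  moreover have "sigma2 = \<sigma>\<^sup>2" unfolding sigma2_def \<sigma>_def by (simp add: sum_nonneg)
  ultimately show ?thesis
    using expected_sbmd_avg_gap_le[OF N_pos \<theta>] W_nonneg[OF x1_in]
      constant_stepsize_bound[OF b_pos N_pos _ Lbar_pos \<sigma>_pos Dt_pos, of "W x1" "\<phi> x1 - \<phi> xstar"]
    unfolding gam gm_def by simp
qed

end
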